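(* Let $n\ge 1$, let $\lambda_0\in\mathbb{C}$, and let $\lambda_1^{\mathcal{C}},\dots,\lambda_n^{\mathcal{C}},\lambda_1^{\mathcal{B}},\dots,\lambda_n^{\mathcal{B}}\in\mathbb{C}$. Put $X=\{\lambda_1^{\mathcal{C}},\dots,\lambda_n^{\mathcal{C}}\}$, $Y=\{\lambda_1^{\mathcal{B}},\dots,\lambda_n^{\mathcal{B}}\}$, and for $\lambda\in X$ (resp. $\lambda\in Y$) write $X_\lambda=X\setminus\{\lambda\}$ (resp. $Y_\lambda=Y\setminus\{\lambda\}$). For $\lambda=\lambda_k^{\mathcal{C}}\in X$, let $\vec X^{0,n}_\lambda$ denote the $n$-tuple obtained from $(\lambda_0,\lambda_1^{\mathcal{C}},\dots,\lambda_n^{\mathcal{C}})$ by deleting the entry $\lambda_k^{\mathcal{C}}$; similarly, for $\lambda=\lambda_k^{\mathcal{B}}\in Y$, let $\vec Y^{0,n}_\lambda$ be obtained from $(\lambda_0,\lambda_1^{\mathcal{B}},\dots,\lambda_n^{\mathcal{B}})$ by deleting $\lambda_k^{\mathcal{B}}$. Define $$M_0=\Lambda_{\mathcal{A}}(\lambda_0)\Big\{\prod_{\lambda\in Y}\frac{a(\lambda-\lambda_0)}{b(\lambda-\lambda_0)}\frac{b(\lambda+\lambda_0)}{a(\lambda+\lambda_0)}-\prod_{\lambda\in X}\frac{a(\lambda-\lambda_0)}{b(\lambda-\lambda_0)}\frac{b(\lambda+\lambda_0)}{a(\lambda+\lambda_0)}\Big\},$$ $$N^{(\mathcal{C})}_\lambda=\Lambda_{\mathcal{A}}(\lambda)\frac{c}{b(\lambda-\lambda_0)}\frac{b(2\lambda)}{a(2\lambda)}\prod_{\tilde\lambda\in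 X_\lambda}\frac{a(\tilde\lambda-\lambda)}{b(\tilde\lambda-\lambda)}\frac{b(\tilde\lambda+\lambda)}{a(\tilde\lambda+\lambda)}+\Lambda_{\tilde{\mathcal{D}}}(\lambda)\frac{c}{a(\lambda+\lambda_0)}\prod_{\tilde\lambda\in X_\lambda}\frac{a(\lambda-\tilde\lambda)}{b(\lambda-\tilde\lambda)}\frac{a(\lambda+\tilde\lambda+\gamma)}{b(\lambda+\tilde\lambda+\gamma)}$$ for $\lambda\in X$, and $$N^{(\mathcal{B})}_\lambda=-\Lambda_{\mathcal{A}}(\lambda)\frac{c}{b(\lambda-\lambda_0)}\frac{b(2\lambda)}{a(2\lambda)}\prod_{\tilde\lambda\in Y_\lambda}\frac{a(\tilde\lambda-\lambda)}{b(\tilde\lambda-\lambda)}\frac{b(\tilde\lambda+\lambda)}{a(\tilde\lambda+\lambda)}-\Lambda_{\tilde{\mathcal{D}}}(\lambda)\frac{c}{a(\lambda+\lambda_0)}\prod_{\tilde\lambda\in Y_\lambda}\frac{a(\lambda-\tilde\lambda)}{b(\lambda-\tilde\lambda)}\frac{a(\lambda+\tilde\lambda+\gamma)}{b(\lambda+\tilde\lambda+\gamma)}$$ for $\lambda\in Y$. Then the scalar product satisfies $$M_0\,\mathcal{S}_n(\lambda_1^{\mathcal{C}},\dots,\lambda_n^{\mathcal{C}}\,|\,\lambda_1^{\mathcal{B}},\dots,\lambda_n^{\mathcal{B}})+\sum_{\lambda\in X}N^{(\mathcal{C})}_\lambda\,\mathcal{S}_n(\vec X^{0,n}_\lambda\,|\,\lambda_1^{\mathcal{B}},\dots,\lambda_n^{\mathcal{B}})+\sum_{\lambda\in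 Y}N^{(\mathcal{B})}_\lambda\,\mathcal{S}_n(\lambda_1^{\mathcal{C}},\dots,\lambda_n^{\mathcal{C}}\,|\,\vec Y^{0,n}_\lambda)=0.$$
   Context: Fix generic $\gamma,h\in\mathbb{C}$, an integer $L\ge1$ and inhomogeneities $\mu_1,\dots,\mu_L\in\mathbb{C}$. Set $a(\lambda)=\sinh(\lambda+\gamma)$, $b(\lambda)=\sinh(\lambda)$, $c=c(\lambda)=\sinh(\gamma)$ (a constant). Let $\mathcal{R}(\lambda)\in\mathrm{End}(\mathbb{C}^2\otimes\mathbb{C}^2)$ be the six-vertex ($\mathcal{U}_q[\widehat{\mathfrak{sl}}(2)]$-invariant) R-matrix, which in the basis $e_1\otimes e_1,e_1\otimes e_2,e_2\otimes e_1,e_2\otimes e_2$ is $\begin{pmatrix}a(\lambda)&0&0&0\\0&b(\lambda)&c&0\\0&c&b(\lambda)&0\\0&0&0&a(\lambda)\end{pmatrix}$, and let $\mathcal{K}(\lambda)=\mathrm{diag}(\sinh(h+\lambda),\sinh(h-\lambda))$. With an auxiliary space $V_0\cong\mathbb{C}^2$ and quantum space $V_{\mathcal{Q}}=(\mathbb{C}^2)^{\otimes L}$ (sites $1,\dots,L$), $\mathcal{R}_{0j}$ denotes $\mathcal{R}$ acting on $V_0\otimes V_j$ and $\mathcal{K}_0$ denotes $\mathcal{K}$ acting on $V_0$. Operators $\mathcal{A},\mathcal{B},\mathcal{C},\mathcal{D}(\lambda)\in\mathrm{End}(V_{\mathcal{Q}})$ are defined by $\mathcal{R}_{0L}(\lambda-\mu_L)\cdots\mathcal{R}_{01}(\lambda-\mu_1)\,\mathcal{K}_0(\lambda)\,\mathcal{R}_{01}(\lambda+\mu_1)\cdots\mathcal{R}_{0L}(\lambda+\mu_L)=\begin{pmatrix}\mathcal{A}(\lambda)&\mathcal{B}(\lambda)\\\mathcal{C}(\lambda)&\mathcal{D}(\lambda)\end{pmatrix}$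 (a $2\times2$ matrix on $V_0$). Let $|0\rangle=(1,0)^{T\otimes L}$ and $\langle 0|=(1,0)^{\otimes L}$. The off-shell scalar product is $\mathcal{S}_n(\lambda_1^{\mathcal{C}},\dots,\lambda_n^{\mathcal{C}}\,|\,\lambda_1^{\mathcal{B}},\dots,\lambda_n^{\mathcal{B}})=\langle0|\mathcal{C}(\lambda_n^{\mathcal{C}})\cdots\mathcal{C}(\lambda_1^{\mathcal{C}})\mathcal{B}(\lambda_1^{\mathcal{B}})\cdots\mathcal{B}(\lambda_n^{\mathcal{B}})|0\rangle$ for arbitrary complex variables. Also $\Lambda_{\mathcal{A}}(\lambda)=b(h+\lambda)\prod_{j=1}^L a(\lambda-\mu_j)a(\lambda+\mu_j)$ and $\Lambda_{\tilde{\mathcal{D}}}(\lambda)=-\frac{b(2\lambda)}{a(2\lambda)}a(\lambda-h)\prod_{j=1}^L b(\lambda-\mu_j)b(\lambda+\mu_j)$. The identity is understood as an identity of meromorphic functions of all the variables. *)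

theory Defs
  imports Complex_Main
begin

(* Basis convention: False = e_1, True = e_2.
   A state of V_Q = (C^2)^{\<otimes>L} is a function on bool lists (only lists of length L matter);
   site j (1 \<le> j \<le> L) corresponds to list index j-1.
   A state of V_0 \<otimes> V_Q is a function on bool \<times> bool list, the first component being V_0. *)

type_synonym qstate = "bool list \<Rightarrow> complex"
type_synonym fstate = "bool \<times> bool list \<Rightarrow> complex"

definition wa :: "complex \<Rightarrow> complex \<Rightarrow> complex" where
  "wa \<gamma> x = sinh (x + \<gamma>)"
definition wb :: "complex \<Rightarrow> complex" where
  "wb x = sinh x"
definition wc :: "complex \<Rightarrow> complex" where
  "wc \<gamma> = sinh \<gamma>"

(* entry of R(x) at row e_{i1}\<otimes>e_{j1}, column e_{i2}\<otimes>e_{j2} *)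
definition Rent :: "complex \<Rightarrow> complex \<Rightarrow> bool \<times> bool \<Rightarrow> bool \<times> bool \<Rightarrow> complex" where
  "Rent \<gamma> x r c' = (case (r, c') of ((i1, j1), (i2, j2)) \<Rightarrow>
     if i1 = i2 \<and> j1 = j2 then (if i1 = j1 then wa \<gamma> x else wb x)
     else if i1 = j2 \<and> j1 = i2 then wc \<gamma> else 0)"

definition Rop :: "complex \<Rightarrow> complex \<Rightarrow> nat \<Rightarrow> fstate \<Rightarrow> fstate" where
  "Rop \<gamma> x j \<psi> = (\<lambda>(a0, s). \<Sum>a0'\<in>UNIV. \<Sum>t\<in>UNIV.
      Rent \<gamma> x (a0, s ! (j - 1)) (a0', t) * \<psi> (a0', s[j - 1 := t]))"

definition Kop :: "complex \<Rightarrow> complex \<Rightarrow> fstate \<Rightarrow> fstate" where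
  "Kop h x \<psi> = (\<lambda>(a0, s). (if a0 then sinh (h - x) else sinh (h + x)) * \<psi> (a0, s))"

(* R_{0L}(\<lambda>-\<mu>_L) \<cdots> R_{01}(\<lambda>-\<mu>_1) K_0(x) R_{01}(\<lambda>+\<mu>_1) \<cdots> R_{0L}(\<lambda>+\<mu>_L) *)
definition Mono :: "complex \<Rightarrow> complex \<Rightarrow> nat \<Rightarrow> (nat \<Rightarrow> complex) \<Rightarrow> complex \<Rightarrow> fstate \<Rightarrow> fstate" where
  "Mono \<gamma> h L \<mu> x =
     fold (\<lambda>j f. Rop \<gamma> (x - \<mu> j) j \<circ> f) [1..<L+1] id
     \<circ> Kop h x
     \<circ> fold (\<lambda>j f. f \<circ> Rop \<gamma> (x + \<mu> j) j) [1..<L+1] id"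

(* (i,j) entry (as operator on V_Q) of the double-row monodromy matrix on V_0 *)
definition Ment :: "complex \<Rightarrow> complex \<Rightarrow> nat \<Rightarrow> (nat \<Rightarrow> complex) \<Rightarrow> bool \<Rightarrow> bool \<Rightarrow> complex \<Rightarrow> qstate \<Rightarrow> qstate" where
  "Ment \<gamma> h L \<mu> i j x \<psi> = (\<lambda>s. Mono \<gamma> h L \<mu> x (\<lambda>(a, s'). if a = j then \<psi> s' else 0) (i, s))"

definition Bop :: "complex \<Rightarrow> complex \<Rightarrow> nat \<Rightarrow> (nat \<Rightarrow> complex) \<Rightarrow> complex \<Rightarrow> qstate \<Rightarrow> qstate" where
  "Bop \<gamma> h L \<mu> = Ment \<gamma> h L \<mu> False True"
definition Cop :: "complex \<Rightarrow> complex \<Rightarrow> nat \<Rightarrow> (nat \<Rightarrow> complex) \<Rightarrow> complex \<Rightarrow> qstate \<Rightarrow> qstate" where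
  "Cop \<gamma> h L \<mu> = Ment \<gamma> h L \<mu> True False"

definition vac :: "nat \<Rightarrow> qstate" where
  "vac L = (\<lambda>s. if s = replicate L False then 1 else 0)"

(* S_n(xs | ys) = <0| C(x_n)\<cdots>C(x_1) B(y_1)\<cdots>B(y_n) |0> *)
definition Sn :: "complex \<Rightarrow> complex \<Rightarrow> nat \<Rightarrow> (nat \<Rightarrow> complex) \<Rightarrow> complex list \<Rightarrow> complex list \<Rightarrow> complex" where
  "Sn \<gamma> h L \<mu> xs ys =
     fold (Cop \<gamma> h L \<mu>) xs (foldr (Bop \<gamma> h L \<mu>) ys (vac L)) (replicate L False)"

definition LamA :: "complex \<Rightarrow> complex \<Rightarrow> nat \<Rightarrow> (nat \<Rightarrow> complex) \<Rightarrow> complex \<Rightarrow> complex" where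
  "LamA \<gamma> h L \<mu> x = wb (h + x) * (\<Prod>j=1..L. wa \<gamma> (x - \<mu> j) * wa \<gamma> (x + \<mu> j))"

definition LamDt :: "complex \<Rightarrow> complex \<Rightarrow> nat \<Rightarrow> (nat \<Rightarrow> complex) \<Rightarrow> complex \<Rightarrow> complex" where
  "LamDt \<gamma> h L \<mu> x = - (wb (2 * x) / wa \<gamma> (2 * x)) * wa \<gamma> (x - h)
      * (\<Prod>j=1..L. wb (x - \<mu> j) * wb (x + \<mu> j))"

definition F1 :: "complex \<Rightarrow> complex \<Rightarrow> complex \<Rightarrow> complex" where
  "F1 \<gamma> u v = wa \<gamma> (u - v) / wb (u - v) * (wb (u + v) / wa \<gamma> (u + v))"

definition F2 :: "complex \<Rightarrow> complex \<Rightarrow> complex \<Rightarrow> complex" where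
  "F2 \<gamma> u v = wa \<gamma> (u - v) / wb (u - v) * (wa \<gamma> (u + v + \<gamma>) / wb (u + v + \<gamma>))"

definition M0 :: "complex \<Rightarrow> complex \<Rightarrow> nat \<Rightarrow> (nat \<Rightarrow> complex) \<Rightarrow> complex \<Rightarrow> complex list \<Rightarrow> complex list \<Rightarrow> complex" where
  "M0 \<gamma> h L \<mu> l0 xs ys = LamA \<gamma> h L \<mu> l0 *
     ((\<Prod>k<length ys. F1 \<gamma> (ys ! k) l0) - (\<Prod>k<length xs. F1 \<gamma> (xs ! k) l0))"

(* N^{(C)}_{\<lambda>} for x = zs!k, with X_x = the other entries of zs; N^{(B)} = - this with zs = ys *)
definition Nlam :: "complex \<Rightarrow> complex \<Rightarrow> nat \<Rightarrow> (nat \<Rightarrow> complex) \<Rightarrow> complex \<Rightarrow> complex list \<Rightarrow> nat \<Rightarrow> complex" where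
  "Nlam \<gamma> h L \<mu> l0 zs k = (let l = zs ! k in
     LamA \<gamma> h L \<mu> l * (wc \<gamma> / wb (l - l0)) * (wb (2 * l) / wa \<gamma> (2 * l))
       * (\<Prod>j\<in>{..<length zs} - {k}. F1 \<gamma> (zs ! j) l)
     + LamDt \<gamma> h L \<mu> l * (wc \<gamma> / wa \<gamma> (l + l0))
       * (\<Prod>j\<in>{..<length zs} - {k}. F2 \<gamma> l (zs ! j)))"

definition NC where "NC = Nlam"
definition NB :: "complex \<Rightarrow> complex \<Rightarrow> nat \<Rightarrow> (nat \<Rightarrow> complex) \<Rightarrow> complex \<Rightarrow> complex list \<Rightarrow> nat \<Rightarrow> complex" where
  "NB \<gamma> h L \<mu> l0 zs k = - Nlam \<gamma> h L \<mu> l0 zs k"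

definition delvec :: "complex \<Rightarrow> complex list \<Rightarrow> nat \<Rightarrow> complex list" where
  "delvec l0 zs k = l0 # (take k zs @ drop (Suc k) zs)"

end

(*
  The scalar product is a bilinear pairing of two off-shell Bethe vectors B(x_1)...B(x_n)|0>:
  every R-matrix is symmetric, so transposing the double-row monodromy matrix amounts to
  negating the inhomogeneities, and the C-operators become transposed B-operators.
  The identity is then obtained by evaluating <0| C(X) A(l0) B(Y) |0> in two ways, letting A(l0)
  act on the B-vector on the right, and, after transposition, on the one on the left.

  The action of A(l0) on an off-shell Bethe vector is the wanted term plus one unwanted term for
  each rapidity. It follows by induction from the exchange relations of A and
  D~ = D - c/a(2x) A with B, which are entries of the reflection equation of the double-row
  monodromy matrix; the latter follows from the Yang-Baxter equation for R and the reflection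
  equation for K by the usual dressing argument, one site at a time.
*)

theory Submission
  imports Defs
begin

section \<open>Site operators and the Yang-Baxter equation\<close>

(* States of V_1 \<otimes> V_2 \<otimes> V_Q for two auxiliary spaces; lift1 and lift2 let an operator on
   V_0 \<otimes> V_Q act on V_1 \<otimes> V_Q or on V_2 \<otimes> V_Q. *)
type_synonym aux2_state = "bool \<times> bool \<times> bool list \<Rightarrow> complex"

(* R_{0j} as Rop, except that it is the identity on lists too short to contain site j; this makes
   the operator calculus independent of the number of sites. *)
definition Rsite :: "complex \<Rightarrow> complex \<Rightarrow> nat \<Rightarrow> fstate \<Rightarrow> fstate" where
  "Rsite \<gamma> x j \<psi> = (\<lambda>(a0, s). if j - 1 < length s then (\<Sum>a0'\<in>UNIV. \<Sum>t\<in>UNIV.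
      Rent \<gamma> x (a0, s ! (j - 1)) (a0', t) * \<psi> (a0', s[j - 1 := t])) else \<psi> (a0, s))"

definition lift1 :: "(fstate \<Rightarrow> fstate) \<Rightarrow> aux2_state \<Rightarrow> aux2_state" where
  "lift1 F \<Psi> = (\<lambda>(a1, a2, s). F (\<lambda>(b, s'). \<Psi> (b, a2, s')) (a1, s))"
definition lift2 :: "(fstate \<Rightarrow> fstate) \<Rightarrow> aux2_state \<Rightarrow> aux2_state" where
  "lift2 F \<Psi> = (\<lambda>(a1, a2, s). F (\<lambda>(b, s'). \<Psi> (a1, b, s')) (a2, s))"
definition R_aux :: "complex \<Rightarrow> complex \<Rightarrow> aux2_state \<Rightarrow> aux2_state" where
  "R_aux \<gamma> x \<Psi> = (\<lambda>(a1, a2, s). \<Sum>b1\<in>UNIV. \<Sum>b2\<in>UNIV. Rent \<gamma> x (a1, a2) (b1, b2) * \<Psi> (b1, b2, s))"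

lemma lift1_comp: "lift1 (F \<circ> G) = lift1 F \<circ> lift1 G"
  by (rule ext)+ (auto simp: lift1_def)
lemma lift2_comp: "lift2 (F \<circ> G) = lift2 F \<circ> lift2 G"
  by (rule ext)+ (auto simp: lift2_def)

lemma sum_UNIV_bool: "(\<Sum>b\<in>(UNIV::bool set). f b) = f False + f True"
  by (simp add: UNIV_bool)

lemma yang_baxter:
  "R_aux \<gamma> (u - v) \<circ> lift1 (Rsite \<gamma> u j) \<circ> lift2 (Rsite \<gamma> v j)
   = lift2 (Rsite \<gamma> v j) \<circ> lift1 (Rsite \<gamma> u j) \<circ> R_aux \<gamma> (u - v)"
proof (rule ext, rule ext, clarify)
  fix \<Psi> :: aux2_state and a1 a2 s
  show "(R_aux \<gamma> (u - v) \<circ> lift1 (Rsite \<gamma> u j) \<circ> lift2 (Rsite \<gamma> v j)) \<Psi> (a1, a2, s) =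
        (lift2 (Rsite \<gamma> v j) \<circ> lift1 (Rsite \<gamma> u j) \<circ> R_aux \<gamma> (u - v)) \<Psi> (a1, a2, s)"
  proof (cases "j - 1 < length s")
    case True
    then show ?thesis
      apply (cases a1; cases a2; cases "s ! (j - 1)")
      apply (simp_all add: R_aux_def lift1_def lift2_def Rsite_def sum_UNIV_bool Rent_def)
      apply (simp_all add: wa_def wb_def wc_def sinh_field_def exp_add exp_diff exp_minus)
      apply (simp_all add: field_simps)
      done
  next
    case False
    then show ?thesis by (simp add: R_aux_def lift1_def lift2_def Rsite_def)
  qed
qed

lemma yang_baxter_crossed:
  assumes "z = y - x"
  shows "lift2 (Rsite \<gamma> x j) \<circ> R_aux \<gamma> y \<circ> lift1 (Rsite \<gamma> z j)
   = lift1 (Rsite \<gamma> z j) \<circ> R_aux \<gamma> y \<circ> lift2 (Rsite \<gamma> x j)"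
proof (rule ext, rule ext, clarify)
  fix \<Psi> :: aux2_state and a1 a2 s
  show "(lift2 (Rsite \<gamma> x j) \<circ> R_aux \<gamma> y \<circ> lift1 (Rsite \<gamma> z j)) \<Psi> (a1, a2, s) =
        (lift1 (Rsite \<gamma> z j) \<circ> R_aux \<gamma> y \<circ> lift2 (Rsite \<gamma> x j)) \<Psi> (a1, a2, s)"
  proof (cases "j - 1 < length s")
    case True
    then show ?thesis
      unfolding assms
      apply (cases a1; cases a2; cases "s ! (j - 1)")
      apply (simp_all add: R_aux_def lift1_def lift2_def Rsite_def sum_UNIV_bool Rent_def)
      apply (simp_all add: wa_def wb_def wc_def sinh_field_def exp_add exp_diff exp_minus)
      apply (simp_all add: field_simps)
      done
  next
    case False
    then show ?thesis by (simp add: R_aux_def lift1_def lift2_def Rsite_def)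
  qed
qed

lemma reflection_K:
  "R_aux \<gamma> (x - y) \<circ> lift1 (Kop h x) \<circ> R_aux \<gamma> (x + y) \<circ> lift2 (Kop h y)
   = lift2 (Kop h y) \<circ> R_aux \<gamma> (x + y) \<circ> lift1 (Kop h x) \<circ> R_aux \<gamma> (x - y)"
proof (rule ext, rule ext, clarify)
  fix \<Psi> :: aux2_state and a1 a2 s
  show "(R_aux \<gamma> (x - y) \<circ> lift1 (Kop h x) \<circ> R_aux \<gamma> (x + y) \<circ> lift2 (Kop h y)) \<Psi> (a1, a2, s) =
        (lift2 (Kop h y) \<circ> R_aux \<gamma> (x + y) \<circ> lift1 (Kop h x) \<circ> R_aux \<gamma> (x - y)) \<Psi> (a1, a2, s)"
      apply (cases a1; cases a2)
      apply (simp_all add: R_aux_def lift1_def lift2_def Kop_def sum_UNIV_bool Rent_def)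
      apply (simp_all add: wa_def wb_def wc_def sinh_field_def exp_add exp_diff exp_minus)
      apply (simp_all add: field_simps)
      done
qed

lemma lift_Rsite_commute:
  assumes "j \<ge> 1" "k \<ge> 1" "j \<noteq> k"
  shows "lift1 (Rsite \<gamma> x j) \<circ> lift2 (Rsite \<gamma> y k) = lift2 (Rsite \<gamma> y k) \<circ> lift1 (Rsite \<gamma> x j)"
proof (rule ext, rule ext, clarify)
  fix \<Psi> :: aux2_state and a1 a2 s
  have ne: "j - 1 \<noteq> k - 1" using assms by simp
  show "(lift1 (Rsite \<gamma> x j) \<circ> lift2 (Rsite \<gamma> y k)) \<Psi> (a1, a2, s) =
        (lift2 (Rsite \<gamma> y k) \<circ> lift1 (Rsite \<gamma> x j)) \<Psi> (a1, a2, s)"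
    using ne
    by (simp add: lift1_def lift2_def Rsite_def sum_UNIV_bool list_update_swap algebra_simps)
qed

lemma lift_Rsite_K_commute: "lift1 (Rsite \<gamma> x j) \<circ> lift2 (Kop h y) = lift2 (Kop h y) \<circ> lift1 (Rsite \<gamma> x j)"
  by (rule ext, rule ext, clarify) (simp add: lift1_def lift2_def Rsite_def Kop_def sum_UNIV_bool algebra_simps)
lemma lift_K_Rsite_commute: "lift1 (Kop h x) \<circ> lift2 (Rsite \<gamma> y k) = lift2 (Rsite \<gamma> y k) \<circ> lift1 (Kop h x)"
  by (rule ext, rule ext, clarify) (simp add: lift1_def lift2_def Rsite_def Kop_def sum_UNIV_bool algebra_simps)

section \<open>The double-row monodromy matrix and the reflection equation\<close>

fun double_row :: "complex \<Rightarrow> complex \<Rightarrow> (nat \<Rightarrow> complex) \<Rightarrow> complex \<Rightarrow> nat list \<Rightarrow> fstate \<Rightarrow> fstate" where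
  "double_row \<gamma> h \<mu> x [] = Kop h x"
| "double_row \<gamma> h \<mu> x (j # js) = Rsite \<gamma> (x - \<mu> j) j \<circ> double_row \<gamma> h \<mu> x js \<circ> Rsite \<gamma> (x + \<mu> j) j"

lemma comp_commute_triple: "r \<circ> a = a \<circ> r \<Longrightarrow> r \<circ> m = m \<circ> r \<Longrightarrow> r \<circ> b = b \<circ> r \<Longrightarrow> r \<circ> (a \<circ> m \<circ> b) = (a \<circ> m \<circ> b) \<circ> r"
  by (simp add: fun_eq_iff)

lemma lift_Rsite_double_row_commute:
  assumes "j \<ge> 1" "j \<notin> set js" "\<forall>k\<in>set js. k \<ge> 1"
  shows "lift1 (Rsite \<gamma> x j) \<circ> lift2 (double_row \<gamma> h \<mu> y js) = lift2 (double_row \<gamma> h \<mu> y js) \<circ> lift1 (Rsite \<gamma> x j)"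
  using assms
proof (induction js)
  case Nil
  then show ?case by (simp only: double_row.simps lift_Rsite_K_commute)
next
  case (Cons k js)
  have c1: "lift1 (Rsite \<gamma> x j) \<circ> lift2 (Rsite \<gamma> z k) = lift2 (Rsite \<gamma> z k) \<circ> lift1 (Rsite \<gamma> x j)" for z
    using Cons.prems by (intro lift_Rsite_commute) auto
  have ih: "lift1 (Rsite \<gamma> x j) \<circ> lift2 (double_row \<gamma> h \<mu> y js) = lift2 (double_row \<gamma> h \<mu> y js) \<circ> lift1 (Rsite \<gamma> x j)"
    by (rule Cons.IH) (use Cons.prems in auto)
  show ?case
    by (simp only: double_row.simps lift2_comp) (intro comp_commute_triple c1 ih)
qed

lemma lift_double_row_Rsite_commute:
  assumes "j \<ge> 1" "j \<notin> set js" "\<forall>k\<in>set js. k \<ge> 1"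
  shows "lift1 (double_row \<gamma> h \<mu> x js) \<circ> lift2 (Rsite \<gamma> y j) = lift2 (Rsite \<gamma> y j) \<circ> lift1 (double_row \<gamma> h \<mu> x js)"
  using assms
proof (induction js)
  case Nil
  then show ?case by (simp only: double_row.simps lift_K_Rsite_commute)
next
  case (Cons k js)
  have c1: "lift1 (Rsite \<gamma> z k) \<circ> lift2 (Rsite \<gamma> y j) = lift2 (Rsite \<gamma> y j) \<circ> lift1 (Rsite \<gamma> z k)" for z
    using Cons.prems by (intro lift_Rsite_commute) auto
  have ih: "lift1 (double_row \<gamma> h \<mu> x js) \<circ> lift2 (Rsite \<gamma> y j) = lift2 (Rsite \<gamma> y j) \<circ> lift1 (double_row \<gamma> h \<mu> x js)"
    by (rule Cons.IH) (use Cons.prems in auto)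
  show ?case
    by (simp only: double_row.simps lift1_comp) (rule sym, intro comp_commute_triple c1[symmetric] ih[symmetric])
qed

lemma comp_rewrite2: "f \<circ> g = f' \<circ> g' \<Longrightarrow> f \<circ> (g \<circ> X) = f' \<circ> (g' \<circ> X)"
  by (metis comp_assoc)
lemma comp_rewrite3: "f \<circ> g \<circ> h = f' \<circ> g' \<circ> h' \<Longrightarrow> f \<circ> (g \<circ> (h \<circ> X)) = f' \<circ> (g' \<circ> (h' \<circ> X))"
  by (metis comp_assoc)
lemma comp_rewrite4: "f \<circ> g \<circ> h \<circ> k = f' \<circ> g' \<circ> h' \<circ> k' \<Longrightarrow> f \<circ> (g \<circ> (h \<circ> (k \<circ> X))) = f' \<circ> (g' \<circ> (h' \<circ> (k' \<circ> X)))"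
  by (metis comp_assoc)
lemma comp_rewrite3_end: "f \<circ> g \<circ> h = f' \<circ> g' \<circ> h' \<Longrightarrow> f \<circ> (g \<circ> h) = f' \<circ> (g' \<circ> h')"
  by (metis comp_assoc)

lemma reflection_dressing:
  fixes P Q A1 B1 W1 A2 B2 W2 :: "'a \<Rightarrow> 'a"
  assumes IH: "P \<circ> W1 \<circ> Q \<circ> W2 = W2 \<circ> Q \<circ> W1 \<circ> P"
    and s1: "B1 \<circ> Q \<circ> A2 = A2 \<circ> Q \<circ> B1" and s2a: "W1 \<circ> A2 = A2 \<circ> W1" and s2b: "B1 \<circ> W2 = W2 \<circ> B1"
    and s3: "P \<circ> A1 \<circ> A2 = A2 \<circ> A1 \<circ> P" and s5: "P \<circ> B1 \<circ> B2 = B2 \<circ> B1 \<circ> P"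
    and s6a: "A1 \<circ> W2 = W2 \<circ> A1" and s6b: "W1 \<circ> B2 = B2 \<circ> W1" and s7: "A1 \<circ> Q \<circ> B2 = B2 \<circ> Q \<circ> A1"
  shows "P \<circ> (A1 \<circ> W1 \<circ> B1) \<circ> Q \<circ> (A2 \<circ> W2 \<circ> B2) = (A2 \<circ> W2 \<circ> B2) \<circ> Q \<circ> (A1 \<circ> W1 \<circ> B1) \<circ> P"
proof -
  have "P \<circ> (A1 \<circ> W1 \<circ> B1) \<circ> Q \<circ> (A2 \<circ> W2 \<circ> B2)
      = P \<circ> (A1 \<circ> (W1 \<circ> (B1 \<circ> (Q \<circ> (A2 \<circ> (W2 \<circ> B2))))))" by (simp add: comp_assoc)
  also have "\<dots> = P \<circ> (A1 \<circ> (W1 \<circ> (A2 \<circ> (Q \<circ> (B1 \<circ> (W2 \<circ> B2))))))" by (simp only: comp_rewrite3[OF s1])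
  also have "\<dots> = P \<circ> (A1 \<circ> (A2 \<circ> (W1 \<circ> (Q \<circ> (W2 \<circ> (B1 \<circ> B2))))))"
    by (simp only: comp_rewrite2[OF s2a] comp_rewrite2[OF s2b])
  also have "\<dots> = A2 \<circ> (A1 \<circ> (P \<circ> (W1 \<circ> (Q \<circ> (W2 \<circ> (B1 \<circ> B2))))))" by (simp only: comp_rewrite3[OF s3])
  also have "\<dots> = A2 \<circ> (A1 \<circ> (W2 \<circ> (Q \<circ> (W1 \<circ> (P \<circ> (B1 \<circ> B2))))))" by (simp only: comp_rewrite4[OF IH])
  also have "\<dots> = A2 \<circ> (A1 \<circ> (W2 \<circ> (Q \<circ> (W1 \<circ> (B2 \<circ> (B1 \<circ> P))))))" by (simp only: comp_rewrite3_end[OF s5])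
  also have "\<dots> = A2 \<circ> (W2 \<circ> (A1 \<circ> (Q \<circ> (B2 \<circ> (W1 \<circ> (B1 \<circ> P))))))"
    by (simp only: comp_rewrite2[OF s6a] comp_rewrite2[OF s6b])
  also have "\<dots> = A2 \<circ> (W2 \<circ> (B2 \<circ> (Q \<circ> (A1 \<circ> (W1 \<circ> (B1 \<circ> P))))))" by (simp only: comp_rewrite3[OF s7])
  also have "\<dots> = (A2 \<circ> W2 \<circ> B2) \<circ> Q \<circ> (A1 \<circ> W1 \<circ> B1) \<circ> P" by (simp add: comp_assoc)
  finally show ?thesis .
qed

lemma reflection_equation:
  assumes "distinct js" "\<forall>k\<in>set js. k \<ge> 1"
  shows "R_aux \<gamma> (x - y) \<circ> lift1 (double_row \<gamma> h \<mu> x js) \<circ> R_aux \<gamma> (x + y) \<circ> lift2 (double_row \<gamma> h \<mu> y js)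
       = lift2 (double_row \<gamma> h \<mu> y js) \<circ> R_aux \<gamma> (x + y) \<circ> lift1 (double_row \<gamma> h \<mu> x js) \<circ> R_aux \<gamma> (x - y)"
  using assms
proof (induction js)
  case Nil
  then show ?case by (simp only: double_row.simps reflection_K)
next
  case (Cons j js)
  have j: "j \<ge> 1" "j \<notin> set js" "\<forall>k\<in>set js. k \<ge> 1"
    using Cons.prems by auto
  have IH: "R_aux \<gamma> (x - y) \<circ> lift1 (double_row \<gamma> h \<mu> x js)
      \<circ> R_aux \<gamma> (x + y) \<circ> lift2 (double_row \<gamma> h \<mu> y js)
    = lift2 (double_row \<gamma> h \<mu> y js) \<circ> R_aux \<gamma> (x + y) \<circ> lift1 (double_row \<gamma> h \<mu> x js) \<circ> R_aux \<gamma> (x - y)"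
    by (rule Cons.IH) (use Cons.prems in auto)
  show ?case
    unfolding double_row.simps lift1_comp lift2_comp
  proof (rule reflection_dressing[OF IH])
    show "lift1 (Rsite \<gamma> (x + \<mu> j) j) \<circ> R_aux \<gamma> (x + y) \<circ> lift2 (Rsite \<gamma> (y - \<mu> j) j)
        = lift2 (Rsite \<gamma> (y - \<mu> j) j) \<circ> R_aux \<gamma> (x + y) \<circ> lift1 (Rsite \<gamma> (x + \<mu> j) j)"
      by (rule yang_baxter_crossed[symmetric]) simp
    show "lift1 (Rsite \<gamma> (x - \<mu> j) j) \<circ> R_aux \<gamma> (x + y) \<circ> lift2 (Rsite \<gamma> (y + \<mu> j) j)
        = lift2 (Rsite \<gamma> (y + \<mu> j) j) \<circ> R_aux \<gamma> (x + y) \<circ> lift1 (Rsite \<gamma> (x - \<mu> j) j)"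
      by (rule yang_baxter_crossed[symmetric]) simp
    show "R_aux \<gamma> (x - y) \<circ> lift1 (Rsite \<gamma> (x - \<mu> j) j) \<circ> lift2 (Rsite \<gamma> (y - \<mu> j) j)
        = lift2 (Rsite \<gamma> (y - \<mu> j) j) \<circ> lift1 (Rsite \<gamma> (x - \<mu> j) j) \<circ> R_aux \<gamma> (x - y)"
      using yang_baxter[of \<gamma> "x - \<mu> j" "y - \<mu> j" j] by simp
    show "R_aux \<gamma> (x - y) \<circ> lift1 (Rsite \<gamma> (x + \<mu> j) j) \<circ> lift2 (Rsite \<gamma> (y + \<mu> j) j)
        = lift2 (Rsite \<gamma> (y + \<mu> j) j) \<circ> lift1 (Rsite \<gamma> (x + \<mu> j) j) \<circ> R_aux \<gamma> (x - y)"
      using yang_baxter[of \<gamma> "x + \<mu> j" "y + \<mu> j" j] by simp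
  qed (intro lift_Rsite_double_row_commute lift_double_row_Rsite_commute j)+
qed

definition linear_op :: "(('a \<Rightarrow> complex) \<Rightarrow> ('b \<Rightarrow> complex)) \<Rightarrow> bool" where
  "linear_op F \<longleftrightarrow> (\<forall>f g. F (\<lambda>z. f z + g z) = (\<lambda>z. F f z + F g z)) \<and> (\<forall>c f. F (\<lambda>z. c * f z) = (\<lambda>z. c * F f z))"

lemma linear_op_comp: "linear_op F \<Longrightarrow> linear_op G \<Longrightarrow> linear_op (F \<circ> G)"
  by (simp add: linear_op_def)

lemma linear_Rsite: "linear_op (Rsite \<gamma> x j)"
  unfolding linear_op_def
  by (auto simp: Rsite_def fun_eq_iff sum.distrib sum_distrib_left algebra_simps)

lemma linear_Kop: "linear_op (Kop h x)"
  unfolding linear_op_def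
  by (auto simp: Kop_def fun_eq_iff algebra_simps)

lemma linear_double_row: "linear_op (double_row \<gamma> h \<mu> x js)"
  by (induction js) (auto simp only: double_row.simps linear_Kop intro!: linear_op_comp linear_Rsite)

lemma linear_op_add: "linear_op F \<Longrightarrow> F (\<lambda>z. f z + g z) = (\<lambda>z. F f z + F g z)"
  by (simp add: linear_op_def)
lemma linear_op_scale: "linear_op F \<Longrightarrow> F (\<lambda>z. c * f z) = (\<lambda>z. c * F f z)"
  by (simp add: linear_op_def)
lemma linear_op_zero: "linear_op F \<Longrightarrow> F (\<lambda>z. 0) = (\<lambda>z. 0)"
  using linear_op_scale[of F 0 "\<lambda>z. 0"] by simp
lemma linear_op_sum: assumes l: "linear_op F" and fin: "finite S"
  shows "F (\<lambda>z. \<Sum>k\<in>S. f k z) = (\<lambda>z. \<Sum>k\<in>S. F (f k) z)"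
  using fin
proof (induction S rule: finite_induct)
  case empty
  then show ?case by (simp add: linear_op_zero[OF l])
next
  case (insert x F')
  then show ?case by (simp add: linear_op_add[OF l])
qed
lemma linear_op_diff: "linear_op F \<Longrightarrow> F (\<lambda>z. f z - g z) = (\<lambda>z. F f z - F g z)"
proof -
  assume l: "linear_op F"
  have "F (\<lambda>z. f z - g z) = F (\<lambda>z. f z + (-1) * g z)" by simp
  also have "\<dots> = (\<lambda>z. F f z - F g z)" by (simp only: linear_op_add[OF l] linear_op_scale[OF l]) simp
  finally show ?thesis .
qed

lemma linear_op_comb:
  fixes n :: nat
  assumes l: "linear_op F"
  shows "F (\<lambda>s. c * u s + (\<Sum>k<n. q k * V k s)) = (\<lambda>s. c * F u s + (\<Sum>k<n. q k * F (V k) s))"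
proof -
  have "F (\<lambda>s. c * u s + (\<Sum>k<n. q k * V k s)) = (\<lambda>s. F (\<lambda>s. c * u s) s + F (\<lambda>s. \<Sum>k<n. q k * V k s) s)"
    by (rule linear_op_add[OF l])
  also have "\<dots> = (\<lambda>s. c * F u s + (\<Sum>k<n. F (\<lambda>s. q k * V k s) s))"
  proof -
    have "F (\<lambda>s. \<Sum>k<n. q k * V k s) = (\<lambda>s. \<Sum>k<n. F (\<lambda>s. q k * V k s) s)"
      by (rule linear_op_sum[OF l finite_lessThan])
    then show ?thesis by (simp only: linear_op_scale[OF l])
  qed
  also have "\<dots> = (\<lambda>s. c * F u s + (\<Sum>k<n. q k * F (V k) s))"
    by (simp only: linear_op_scale[OF l])
  finally show ?thesis .
qed

(* The (i, j) entry on V_0 of the double-row monodromy matrix: A, B, C, D are the entries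
   (False, False), (False, True), (True, False), (True, True). *)
definition entry :: "complex \<Rightarrow> complex \<Rightarrow> (nat \<Rightarrow> complex) \<Rightarrow> nat list \<Rightarrow> bool \<Rightarrow> bool \<Rightarrow> complex \<Rightarrow> qstate \<Rightarrow> qstate" where
  "entry \<gamma> h \<mu> js i j x \<phi> = (\<lambda>s. double_row \<gamma> h \<mu> x js (\<lambda>(a, s'). if a = j then \<phi> s' else 0) (i, s))"

lemma linear_entry: "linear_op (entry \<gamma> h \<mu> js i j x)"
proof -
  have l: "linear_op (double_row \<gamma> h \<mu> x js)" by (rule linear_double_row)
  have e1: "(\<lambda>(a, s'). if a = j then f s' + g s' else 0) = (\<lambda>z. (\<lambda>(a, s'). if a = j then f s' else 0) z + (\<lambda>(a, s'). if a = j then g s' else 0) z)" for f g :: qstate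
    by (auto simp: fun_eq_iff)
  have e2: "(\<lambda>(a, s'). if a = j then c * f s' else 0) = (\<lambda>z. c * (\<lambda>(a, s'). if a = j then f s' else 0) z)" for c and f :: qstate
    by (auto simp: fun_eq_iff)
  show ?thesis unfolding linear_op_def entry_def
    by (simp only: e1 e2 linear_op_add[OF l] linear_op_scale[OF l]) simp
qed

lemma double_row_entry_decomp: "double_row \<gamma> h \<mu> x js f (i, s) = (\<Sum>b\<in>UNIV. entry \<gamma> h \<mu> js i b x (\<lambda>s'. f (b, s')) s)"
proof -
  have l: "linear_op (double_row \<gamma> h \<mu> x js)" by (rule linear_double_row)
  have "f = (\<lambda>z. \<Sum>b\<in>UNIV. (\<lambda>(a, s'). if a = b then f (b, s') else 0) z)"
    by (auto simp: fun_eq_iff sum_UNIV_bool)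
  then have "double_row \<gamma> h \<mu> x js f = double_row \<gamma> h \<mu> x js (\<lambda>z. \<Sum>b\<in>UNIV. (\<lambda>(a, s'). if a = b then f (b, s') else 0) z)"
    by simp
  also have "\<dots> = (\<lambda>z. \<Sum>b\<in>UNIV. double_row \<gamma> h \<mu> x js (\<lambda>(a, s'). if a = b then f (b, s') else 0) z)"
    by (rule linear_op_sum[OF l finite])
  finally have "double_row \<gamma> h \<mu> x js f = (\<lambda>z. \<Sum>b\<in>UNIV. double_row \<gamma> h \<mu> x js (\<lambda>(a, s'). if a = b then f (b, s') else 0) z)" .
  then show ?thesis by (simp add: entry_def)
qed

lemma lift1_double_row: "lift1 (double_row \<gamma> h \<mu> x js) \<Psi> (a1, a2, s) = (\<Sum>b\<in>UNIV. entry \<gamma> h \<mu> js a1 b x (\<lambda>s'. \<Psi> (b, a2, s')) s)"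
  by (simp add: lift1_def double_row_entry_decomp)
lemma lift2_double_row: "lift2 (double_row \<gamma> h \<mu> x js) \<Psi> (a1, a2, s) = (\<Sum>b\<in>UNIV. entry \<gamma> h \<mu> js a2 b x (\<lambda>s'. \<Psi> (a1, b, s')) s)"
  by (simp add: lift2_def double_row_entry_decomp)

lemma entry_add: "entry \<gamma> h \<mu> js i j x (\<lambda>s. f s + g s) = (\<lambda>s. entry \<gamma> h \<mu> js i j x f s + entry \<gamma> h \<mu> js i j x g s)"
  by (rule linear_op_add[OF linear_entry])
lemma entry_scale: "entry \<gamma> h \<mu> js i j x (\<lambda>s. c * f s) = (\<lambda>s. c * entry \<gamma> h \<mu> js i j x f s)"
  by (rule linear_op_scale[OF linear_entry])
lemma entry_zero: "entry \<gamma> h \<mu> js i j x (\<lambda>s. 0) = (\<lambda>s. 0)"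
  by (rule linear_op_zero[OF linear_entry])

lemma reflection_equation_apply:
  assumes "distinct js" "\<forall>k\<in>set js. k \<ge> 1"
  shows "R_aux \<gamma> (x - y) (lift1 (double_row \<gamma> h \<mu> x js) (R_aux \<gamma> (x + y) (lift2 (double_row \<gamma> h \<mu> y js) \<Psi>))) z
       = lift2 (double_row \<gamma> h \<mu> y js) (R_aux \<gamma> (x + y) (lift1 (double_row \<gamma> h \<mu> x js) (R_aux \<gamma> (x - y) \<Psi>))) z"
  using fun_cong[OF fun_cong[OF reflection_equation[OF assms, of \<gamma> x y h \<mu>], of \<Psi>], of z] by simp

section \<open>Continuity in the spectral parameter\<close>

definition param_continuous :: "(complex \<Rightarrow> 'a \<Rightarrow> complex) \<Rightarrow> bool" where
  "param_continuous F \<longleftrightarrow> (\<forall>z. continuous_on UNIV (\<lambda>y. F y z))"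

lemma continuous_on_if_const: "continuous_on S f \<Longrightarrow> continuous_on S g \<Longrightarrow> continuous_on S (\<lambda>x. if P then f x else g x)"
  by (cases P) auto

lemma continuous_on_Rent: "continuous_on UNIV e \<Longrightarrow> continuous_on UNIV (\<lambda>y. Rent \<gamma> (e y) p q)"
  unfolding Rent_def wa_def wb_def wc_def
  by (auto simp: split_beta intro!: continuous_intros continuous_on_if_const)

lemma param_continuous_Rsite: "param_continuous F \<Longrightarrow> continuous_on UNIV e \<Longrightarrow> param_continuous (\<lambda>y. Rsite \<gamma> (e y) j (F y))"
  unfolding param_continuous_def Rsite_def
  by (auto intro!: continuous_intros continuous_on_if_const continuous_on_Rent simp: split_beta)

lemma param_continuous_Kop: "param_continuous F \<Longrightarrow> continuous_on UNIV e \<Longrightarrow> param_continuous (\<lambda>y. Kop h (e y) (F y))"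
  unfolding param_continuous_def Kop_def
  by (auto intro!: continuous_intros continuous_on_if_const simp: split_beta)

lemma param_continuous_double_row: "param_continuous F \<Longrightarrow> continuous_on UNIV e \<Longrightarrow> param_continuous (\<lambda>y. double_row \<gamma> h \<mu> (e y) js (F y))"
proof (induction js arbitrary: F)
  case Nil
  then show ?case by (simp add: param_continuous_Kop)
next
  case (Cons j js)
  have c1: "continuous_on UNIV (\<lambda>y. e y + \<mu> j)" "continuous_on UNIV (\<lambda>y. e y - \<mu> j)"
    using Cons.prems by (auto intro!: continuous_intros continuous_on_if_const)
  have "param_continuous (\<lambda>y. Rsite \<gamma> (e y + \<mu> j) j (F y))" by (rule param_continuous_Rsite[OF Cons.prems(1) c1(1)])
  then have "param_continuous (\<lambda>y. double_row \<gamma> h \<mu> (e y) js (Rsite \<gamma> (e y + \<mu> j) j (F y)))" using Cons.IH Cons.prems(2) by blast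
  then have "param_continuous (\<lambda>y. Rsite \<gamma> (e y - \<mu> j) j (double_row \<gamma> h \<mu> (e y) js (Rsite \<gamma> (e y + \<mu> j) j (F y))))"
    by (rule param_continuous_Rsite[OF _ c1(2)])
  then show ?case by simp
qed

lemma param_continuous_entry_arg: "param_continuous G \<Longrightarrow> param_continuous (\<lambda>y. entry \<gamma> h \<mu> js i j x (G y))"
proof -
  assume g: "param_continuous G"
  have "param_continuous (\<lambda>y. (\<lambda>(a, s'). if a = j then G y s' else 0) :: fstate)"
    using g unfolding param_continuous_def by (auto simp: split_beta intro!: continuous_intros continuous_on_if_const)
  from param_continuous_double_row[OF this, of "\<lambda>y. x"] show ?thesis
    unfolding param_continuous_def entry_def by auto
qed

lemma param_continuous_entry: "param_continuous (\<lambda>y. entry \<gamma> h \<mu> js i j y \<phi>)"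
proof -
  have "param_continuous (\<lambda>y. (\<lambda>(a, s'). if a = j then \<phi> s' else 0) :: fstate)"
    unfolding param_continuous_def by auto
  from param_continuous_double_row[OF this, of "\<lambda>y. y"] show ?thesis
    unfolding param_continuous_def entry_def by auto
qed

lemma sinh_shift_zero_unique:
  fixes w :: complex and r1 r2 :: real
  assumes "sinh (w + of_real r1) = 0" "sinh (w + of_real r2) = 0"
  shows "r1 = r2"
proof -
  have e: "exp z * exp z = 1" if "sinh z = 0" for z :: complex
  proof -
    from that have "exp z = exp (- z)" by (simp add: sinh_field_def)
    then have "exp z * exp z = exp z * exp (-z)" by simp
    also have "\<dots> = 1" by (rule exp_minus_inverse)
    finally show ?thesis .
  qed
  have x: "exp (w + of_real r) * exp (w + of_real r) = (exp w * exp w) * of_real (exp r * exp r)" for r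
    by (simp add: exp_add exp_of_real mult_ac)
  have "(exp w * exp w) * of_real (exp r1 * exp r1) = (exp w * exp w) * of_real (exp r2 * exp r2)"
    using e[OF assms(1)] e[OF assms(2)] x[of r1] x[of r2] by simp
  then have "of_real (exp r1 * exp r1) = (of_real (exp r2 * exp r2) :: complex)"
    by (simp del: of_real_mult)
  then have "exp r1 * exp r1 = exp r2 * exp r2" by (simp only: of_real_eq_iff)
  then have "(exp r1)\<^sup>2 = (exp r2)\<^sup>2" by (simp add: power2_eq_square)
  then have "exp r1 = exp r2" by (simp add: power2_eq_iff_nonneg)
  then show ?thesis by simp
qed

lemma eventually_sinh_nonzero:
  fixes w :: complex and c :: real
  assumes "c \<noteq> 0"
  shows "eventually (\<lambda>n. sinh (w + of_real (c * inverse (real (Suc n)))) \<noteq> 0) sequentially"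
proof (cases "\<exists>m. sinh (w + of_real (c * inverse (real (Suc m)))) = 0")
  case False
  then show ?thesis by auto
next
  case True
  then obtain m where m: "sinh (w + of_real (c * inverse (real (Suc m)))) = 0" by blast
  show ?thesis
  proof (rule eventually_sequentiallyI[of "Suc m"])
    fix n assume n: "Suc m \<le> n"
    show "sinh (w + of_real (c * inverse (real (Suc n)))) \<noteq> 0"
    proof
      assume "sinh (w + of_real (c * inverse (real (Suc n)))) = 0"
      with m have "c * inverse (real (Suc m)) = c * inverse (real (Suc n))"
        by (rule sinh_shift_zero_unique)
      with n \<open>c \<noteq> 0\<close> show False by simp
    qed
  qed
qed

(* The exchange relations come out of the reflection equation multiplied by sinh factors, which
   vanish only on a discrete set; this lemma removes them. *)
lemma continuous_zero_off_sinh_zeros: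
  fixes G :: "complex \<Rightarrow> complex"
  assumes cont: "continuous_on UNIV G"
    and gen: "\<And>y. sinh (p - y) \<noteq> 0 \<Longrightarrow> sinh (q + y) \<noteq> 0 \<Longrightarrow> G y = 0"
  shows "G y = 0"
proof -
  define f where "f n = y + of_real (inverse (real (Suc n)))" for n
  have "(\<lambda>n. of_real (inverse (real (Suc n))) :: complex) \<longlonglongrightarrow> of_real 0"
    by (rule tendsto_of_real[OF LIMSEQ_inverse_real_of_nat])
  then have "f \<longlonglongrightarrow> y + 0"
    unfolding f_def by (intro tendsto_add tendsto_const) (simp only: of_real_0)
  then have lim: "(\<lambda>n. G (f n)) \<longlonglongrightarrow> G y"
    by (intro continuous_on_tendsto_compose[OF cont]) auto
  have "eventually (\<lambda>n. sinh (p - f n) \<noteq> 0) sequentially"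
    using eventually_sinh_nonzero[of "-1" "p - y"] by (simp add: f_def algebra_simps)
  moreover have "eventually (\<lambda>n. sinh (q + f n) \<noteq> 0) sequentially"
    using eventually_sinh_nonzero[of 1 "q + y"] by (simp add: f_def algebra_simps)
  ultimately have "eventually (\<lambda>n. G (f n) = 0) sequentially"
    by eventually_elim (rule gen)
  then have "(\<lambda>n. G (f n)) \<longlonglongrightarrow> 0"
    by (rule tendsto_eventually)
  with lim show ?thesis
    by (rule LIMSEQ_unique)
qed

lemma wb_minus_commute: "wb (y - x) = - wb (x - y)"
  unfolding wb_def by (metis minus_diff_eq sinh_minus)
lemma wb_add_commute: "wb (y + x) = wb (x + y)" by (simp add: add.commute)
lemma wa_add_commute: "wa g (y + x) = wa g (x + y)" by (simp add: add.commute)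

lemma wb_add_wa_double: "wb (x + y) * wa g (2 * y) = wb (2 * y) * wa g (x + y) + wc g * wb (x - y)"
  unfolding wa_def wb_def wc_def mult_2 sinh_field_def
  by (simp only: exp_add exp_diff exp_minus) (simp add: field_simps, (simp add: algebra_simps)?)
lemma wa_wa_minus_wb_wb: "wa g (x - y) * wa g (x + y) - wb (x - y) * wb (x + y) = wc g * wa g (2 * x)"
  unfolding wa_def wb_def wc_def mult_2 sinh_field_def
  by (simp only: exp_add exp_diff exp_minus) (simp add: field_simps, (simp add: algebra_simps)?)
lemma wa_sq_minus_wc_sq: "wa g (x + y) * wa g (x + y) - wc g * wc g = wb (x + y) * wa g (x + y + g)"
  unfolding wa_def wb_def wc_def mult_2 sinh_field_def
  by (simp only: exp_add exp_diff exp_minus) (simp add: field_simps, (simp add: algebra_simps)?)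
lemma wb_diff_wa_shift: "wb (x - y) * wa g (x + y + g) = wc g * wa g (2 * x) - wa g (x + y) * wa g (y - x)"
  unfolding wa_def wb_def wc_def mult_2 sinh_field_def
  by (simp only: exp_add exp_diff exp_minus) (simp add: field_simps, (simp add: algebra_simps)?)
lemma wb_add_wa_double_shift: "wb (x + y) * wa g (2 * x + g) = wa g (2 * x) * wa g (x + y) - wc g * wa g (x - y)"
  unfolding wa_def wb_def wc_def mult_2 sinh_field_def
  by (simp only: exp_add exp_diff exp_minus) (simp add: field_simps, (simp add: algebra_simps)?)
lemma Dt_exchange_identity: "- wb (x - y) * wa g (2 * x + g) * (wc g * wa g (x + y) + wb (2 * y) * wb (x - y))
     = wa g (x - y) * wa g (2 * y) * (wc g * wa g (x + y) - wa g (x - y) * wa g (2 * x))"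
  unfolding wa_def wb_def wc_def mult_2 sinh_field_def
  by (simp only: exp_add exp_diff exp_minus) (simp add: field_simps, (simp add: algebra_simps)?)

lemma A_exchange_rearrange:
  fixes bm ap a2y amr bp c b2y AxBy ByAx BxAy BxDy :: complex
  assumes h0: "bp * a2y = b2y * ap + c * bm"
  shows "bm * ap * a2y * AxBy
     - (- amr * bp * a2y * ByAx + c * b2y * ap * BxAy - c * bm * (a2y * BxDy - c * BxAy))
   = a2y * (amr * bp * ByAx - (ap * (- bm) * AxBy + bp * c * BxAy + c * (- bm) * BxDy))"
proof -
  have "bm * ap * a2y * AxBy
     - (- amr * bp * a2y * ByAx + c * b2y * ap * BxAy - c * bm * (a2y * BxDy - c * BxAy))
   - a2y * (amr * bp * ByAx - (ap * (- bm) * AxBy + bp * c * BxAy + c * (- bm) * BxDy))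
    = c * BxAy * (bp * a2y - (b2y * ap + c * bm))"
    by (simp add: algebra_simps)
  then show ?thesis using h0 by simp
qed

lemma Dt_exchange_rearrange:
  fixes am ap bm bp a2x a2y b2y c A2 A3 amr AxBy ByAx BxAy BxDy ByDx AyBx DxBy :: complex
  assumes h1: "am * ap - bm * bp = c * a2x"
    and h2: "ap * ap - c * c = bp * A3"
    and h3: "bm * A3 = c * a2x - ap * amr"
    and h4: "bp * A2 = a2x * ap - c * am"
    and h5: "- bm * A2 * (c * ap + b2y * bm) = am * a2y * (c * ap - am * a2x)"
  shows "bm * bp * (bm * ap * a2y * (a2x * DxBy - c * AxBy)) - bm * bp * (am * A3 * a2y * (a2x * ByDx - c * ByAx)
            - c * A2 * ap * (a2y * BxDy - c * BxAy) + c * A2 * b2y * bm * BxAy)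
   = (- c * am * a2x * a2y) * (am * bp * BxAy - (ap * bm * AyBx + bp * c * ByAx + c * bm * ByDx))
     + (- c * a2y * am * ap) * (amr * bp * ByAx - (ap * (- bm) * AxBy + bp * c * BxAy + c * (- bm) * BxDy))
     + (bm * ap * a2x * a2y) * (c * c * AxBy + c * ap * BxDy + bm * bp * DxBy - (c * am * AyBx + ap * am * ByDx))"
proof -
  have "bm * bp * (bm * ap * a2y * (a2x * DxBy - c * AxBy)) - bm * bp * (am * A3 * a2y * (a2x * ByDx - c * ByAx)
            - c * A2 * ap * (a2y * BxDy - c * BxAy) + c * A2 * b2y * bm * BxAy)
   - ((- c * am * a2x * a2y) * (am * bp * BxAy - (ap * bm * AyBx + bp * c * ByAx + c * bm * ByDx))
     + (- c * a2y * am * ap) * (amr * bp * ByAx - (ap * (- bm) * AxBy + bp * c * BxAy + c * (- bm) * BxDy))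
     + (bm * ap * a2x * a2y) * (c * c * AxBy + c * ap * BxDy + bm * bp * DxBy - (c * am * AyBx + ap * am * ByDx)))
   = c * bm * ap * a2y * AxBy * ((am * ap - bm * bp) - c * a2x)
     + am * bm * a2x * a2y * ByDx * ((ap * ap - c * c) - bp * A3)
     + c * am * a2y * bp * ByAx * (bm * A3 - (c * a2x - ap * amr))
     + c * bm * ap * a2y * BxDy * (bp * A2 - (a2x * ap - c * am))
     + c * bp * BxAy * (- bm * A2 * (c * ap + b2y * bm) - am * a2y * (c * ap - am * a2x))"
    by (simp add: algebra_simps)
  then show ?thesis using h1 h2 h3 h4 h5 by simp
qed

section \<open>Exchange relations\<close>

locale site_chain =
  fixes \<gamma> h :: complex and \<mu> :: "nat \<Rightarrow> complex" and js :: "nat list"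
  assumes dj: "distinct js" and pos: "\<forall>k\<in>set js. k \<ge> 1"
begin

abbreviation "E \<equiv> entry \<gamma> h \<mu> js"
abbreviation "a \<equiv> wa \<gamma>"
abbreviation "c \<equiv> wc \<gamma>"

lemma reflection_AB: "a (x - y) * wb (x + y) * E False True x (E False False y \<phi>) s =
   a (x + y) * wb (x - y) * E False False y (E False True x \<phi>) s
   + wb (x + y) * c * E False True y (E False False x \<phi>) s
   + c * wb (x - y) * E False True y (E True True x \<phi>) s"
  using reflection_equation_apply[OF dj pos, where \<gamma> = \<gamma> and h = h and \<mu> = \<mu> and x = x and y = y
      and \<Psi> = "\<lambda>(b1, b2, s'). if b1 = True \<and> b2 = False then \<phi> s' else 0" and z = "(False, False, s)"]
  apply (simp only: R_aux_def lift1_double_row lift2_double_row split_conv sum_UNIV_bool)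
  apply (simp add: Rent_def entry_add entry_scale entry_zero)
  apply (simp add: algebra_simps)
  done

lemma reflection_DB: "c * c * E False False x (E False True y \<phi>) s + c * a (x + y) * E False True x (E True True y \<phi>) s
   + wb (x - y) * wb (x + y) * E True True x (E False True y \<phi>) s
   = c * a (x - y) * E False False y (E False True x \<phi>) s + a (x + y) * a (x - y) * E False True y (E True True x \<phi>) s"
  using reflection_equation_apply[OF dj pos, where \<gamma> = \<gamma> and h = h and \<mu> = \<mu> and x = x and y = y
      and \<Psi> = "\<lambda>(b1, b2, s'). if b1 = True \<and> b2 = True then \<phi> s' else 0" and z = "(True, False, s)"]
  apply (simp only: R_aux_def lift1_double_row lift2_double_row split_conv sum_UNIV_bool)
  apply (simp add: Rent_def entry_add entry_scale entry_zero)
  apply (simp add: algebra_simps)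
  done

lemma reflection_BB: "a (x - y) * wb (x + y) * (E False True x (E False True y \<phi>) s - E False True y (E False True x \<phi>) s) = 0"
  using reflection_equation_apply[OF dj pos, where \<gamma> = \<gamma> and h = h and \<mu> = \<mu> and x = x and y = y
      and \<Psi> = "\<lambda>(b1, b2, s'). if b1 = True \<and> b2 = True then \<phi> s' else 0" and z = "(False, False, s)"]
  apply (simp only: R_aux_def lift1_double_row lift2_double_row split_conv sum_UNIV_bool)
  apply (simp add: Rent_def entry_add entry_scale entry_zero)
  done

(* a(2x) times D~(x) = D(x) - c/a(2x) A(x), the operator whose vacuum eigenvalue is LamDt. *)
definition Dt :: "complex \<Rightarrow> qstate \<Rightarrow> qstate" where
  "Dt x \<phi> = (\<lambda>s. a (2 * x) * E True True x \<phi> s - c * E False False x \<phi> s)"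

lemma entry_Dt: "E i j x (Dt y \<phi>) s = a (2 * y) * E i j x (E True True y \<phi>) s - c * E i j x (E False False y \<phi>) s"
proof -
  have l: "linear_op (E i j x)" by (rule linear_entry)
  have "E i j x (Dt y \<phi>) = (\<lambda>s. E i j x (\<lambda>s. a (2 * y) * E True True y \<phi> s) s - E i j x (\<lambda>s. c * E False False y \<phi> s) s)"
    unfolding Dt_def by (rule linear_op_diff[OF l])
  then show ?thesis by (simp add: linear_op_scale[OF l])
qed

lemma linear_Dt: "linear_op (Dt x)"
proof -
  have l1: "linear_op (E True True x)" and l2: "linear_op (E False False x)" by (rule linear_entry)+
  show ?thesis
    unfolding linear_op_def Dt_def
    by (simp add: linear_op_add[OF l1] linear_op_add[OF l2] linear_op_scale[OF l1] linear_op_scale[OF l2] algebra_simps)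
qed

lemma continuous_entry_entry: "continuous_on UNIV (\<lambda>y. E i j x (E k l y \<phi>) s)"
proof -
  have "param_continuous (\<lambda>y. E i j x (E k l y \<phi>))" by (rule param_continuous_entry_arg[OF param_continuous_entry])
  then show ?thesis unfolding param_continuous_def by blast
qed
lemma continuous_entry: "continuous_on UNIV (\<lambda>y. E i j y \<psi> s)"
proof -
  have "param_continuous (\<lambda>y. E i j y \<psi>)" by (rule param_continuous_entry)
  then show ?thesis unfolding param_continuous_def by blast
qed

lemma B_commute: "E False True x (E False True y \<phi>) s = E False True y (E False True x \<phi>) s"
proof -
  have "continuous_on UNIV (\<lambda>y. E False True x (E False True y \<phi>) s - E False True y (E False True x \<phi>) s)"
    by (intro continuous_on_diff continuous_entry_entry continuous_entry)
  then have "E False True x (E False True y \<phi>) s - E False True y (E False True x \<phi>) s = 0"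
  proof (rule continuous_zero_off_sinh_zeros[of _ "x + \<gamma>" x])
    fix y assume "sinh (x + \<gamma> - y) \<noteq> 0" "sinh (x + y) \<noteq> 0"
    then have "a (x - y) \<noteq> 0" "wb (x + y) \<noteq> 0"
      by (simp_all add: wa_def wb_def algebra_simps)
    then show "E False True x (E False True y \<phi>) s - E False True y (E False True x \<phi>) s = 0"
      using reflection_BB[of x y \<phi> s] by simp
  qed
  then show ?thesis by simp
qed

lemma A_B_exchange: "wb (x - y) * a (x + y) * a (2 * y) * E False False x (E False True y \<phi>) s =
    - a (y - x) * wb (x + y) * a (2 * y) * E False True y (E False False x \<phi>) s
    + c * wb (2 * y) * a (x + y) * E False True x (E False False y \<phi>) s
    - c * wb (x - y) * E False True x (Dt y \<phi>) s"
proof -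
  have e: "a (y - x) * wb (x + y) * E False True y (E False False x \<phi>) s
    - (a (x + y) * (- wb (x - y)) * E False False x (E False True y \<phi>) s
      + wb (x + y) * c * E False True x (E False False y \<phi>) s
      + c * (- wb (x - y)) * E False True x (E True True y \<phi>) s) = 0"
    using reflection_AB[of y x \<phi> s]
    unfolding wb_minus_commute[of y x] wb_add_commute[of y x] wa_add_commute[of \<gamma> y x]
    by (simp only: right_minus_eq)
  have "wb (x - y) * a (x + y) * a (2 * y) * E False False x (E False True y \<phi>) s
    - (- a (y - x) * wb (x + y) * a (2 * y) * E False True y (E False False x \<phi>) s
      + c * wb (2 * y) * a (x + y) * E False True x (E False False y \<phi>) s
      - c * wb (x - y) * (a (2 * y) * E False True x (E True True y \<phi>) s - c * E False True x (E False False y \<phi>) s)) = 0"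
    using A_exchange_rearrange[OF wb_add_wa_double[of x y \<gamma>], where AxBy = "E False False x (E False True y \<phi>) s"
      and ByAx = "E False True y (E False False x \<phi>) s" and BxAy = "E False True x (E False False y \<phi>) s"
      and BxDy = "E False True x (E True True y \<phi>) s" and amr = "a (y - x)"]
    unfolding e by simp
  then show ?thesis unfolding entry_Dt by (simp only: right_minus_eq)
qed

lemma Dt_B_exchange_generic:
  assumes "wb (x - y) \<noteq> 0" "wb (x + y) \<noteq> 0"
  shows "wb (x - y) * a (x + y) * a (2 * y) * Dt x (E False True y \<phi>) s =
    a (x - y) * a (x + y + \<gamma>) * a (2 * y) * E False True y (Dt x \<phi>) s
    - c * a (2 * x + \<gamma>) * a (x + y) * E False True x (Dt y \<phi>) s
    + c * a (2 * x + \<gamma>) * wb (2 * y) * wb (x - y) * E False True x (E False False y \<phi>) s"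
    (is "?lhs = ?rhs")
proof -
  have e1: "a (x - y) * wb (x + y) * E False True x (E False False y \<phi>) s
    - (a (x + y) * wb (x - y) * E False False y (E False True x \<phi>) s
      + wb (x + y) * c * E False True y (E False False x \<phi>) s
      + c * wb (x - y) * E False True y (E True True x \<phi>) s) = 0"
    using reflection_AB[of x y \<phi> s] by (simp only: right_minus_eq)
  have e2: "a (y - x) * wb (x + y) * E False True y (E False False x \<phi>) s
    - (a (x + y) * (- wb (x - y)) * E False False x (E False True y \<phi>) s
      + wb (x + y) * c * E False True x (E False False y \<phi>) s
      + c * (- wb (x - y)) * E False True x (E True True y \<phi>) s) = 0"
    using reflection_AB[of y x \<phi> s]
    unfolding wb_minus_commute[of y x] wb_add_commute[of y x] wa_add_commute[of \<gamma> y x]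
    by (simp only: right_minus_eq)
  have e3: "c * c * E False False x (E False True y \<phi>) s + c * a (x + y) * E False True x (E True True y \<phi>) s
      + wb (x - y) * wb (x + y) * E True True x (E False True y \<phi>) s
    - (c * a (x - y) * E False False y (E False True x \<phi>) s
      + a (x + y) * a (x - y) * E False True y (E True True x \<phi>) s) = 0"
    using reflection_DB[of x y \<phi> s] by (simp only: right_minus_eq)
  note r = Dt_exchange_rearrange[OF wa_wa_minus_wb_wb[of \<gamma> x y] wa_sq_minus_wc_sq[of \<gamma> x y]
      wb_diff_wa_shift[of x y \<gamma>] wb_add_wa_double_shift[of x y \<gamma>] Dt_exchange_identity[of x y \<gamma>],
    where AxBy = "E False False x (E False True y \<phi>) s" and ByAx = "E False True y (E False False x \<phi>) s"
      and BxAy = "E False True x (E False False y \<phi>) s" and BxDy = "E False True x (E True True y \<phi>) s"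
      and ByDx = "E False True y (E True True x \<phi>) s" and AyBx = "E False False y (E False True x \<phi>) s"
      and DxBy = "E True True x (E False True y \<phi>) s"]
  have "wb (x - y) * wb (x + y) * (?lhs - ?rhs) = 0"
    using r unfolding e1 e2 e3 entry_Dt unfolding Dt_def by (simp add: algebra_simps)
  with assms show ?thesis by simp
qed

lemma Dt_B_exchange: "wb (x - y) * a (x + y) * a (2 * y) * Dt x (E False True y \<phi>) s =
    a (x - y) * a (x + y + \<gamma>) * a (2 * y) * E False True y (Dt x \<phi>) s
    - c * a (2 * x + \<gamma>) * a (x + y) * E False True x (Dt y \<phi>) s
    + c * a (2 * x + \<gamma>) * wb (2 * y) * wb (x - y) * E False True x (E False False y \<phi>) s"
proof -
  have "continuous_on UNIV (\<lambda>y. wb (x - y) * a (x + y) * a (2 * y) * Dt x (E False True y \<phi>) s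
    - (a (x - y) * a (x + y + \<gamma>) * a (2 * y) * E False True y (Dt x \<phi>) s
      - c * a (2 * x + \<gamma>) * a (x + y) * E False True x (Dt y \<phi>) s
      + c * a (2 * x + \<gamma>) * wb (2 * y) * wb (x - y) * E False True x (E False False y \<phi>) s))"
    unfolding entry_Dt unfolding Dt_def wa_def wb_def wc_def
    by (intro continuous_on_diff continuous_on_add continuous_on_mult continuous_on_const continuous_on_id
        continuous_on_sinh continuous_entry_entry continuous_entry)
  then have "wb (x - y) * a (x + y) * a (2 * y) * Dt x (E False True y \<phi>) s
    - (a (x - y) * a (x + y + \<gamma>) * a (2 * y) * E False True y (Dt x \<phi>) s
      - c * a (2 * x + \<gamma>) * a (x + y) * E False True x (Dt y \<phi>) s
      + c * a (2 * x + \<gamma>) * wb (2 * y) * wb (x - y) * E False True x (E False False y \<phi>) s) = 0"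
    by (rule continuous_zero_off_sinh_zeros[of _ x x]) (simp add: Dt_B_exchange_generic[unfolded wb_def] wb_def)
  then show ?thesis by simp
qed

end

section \<open>Action on the reference state\<close>

lemma list_update_same_nth: "i < length s \<Longrightarrow> s ! i = v \<Longrightarrow> s[i := v] = s"
  by (metis list_update_id)

definition supported_e1 :: "nat \<Rightarrow> qstate \<Rightarrow> bool" where
  "supported_e1 j \<omega> \<longleftrightarrow> (\<forall>s. \<omega> s \<noteq> 0 \<longrightarrow> j - 1 < length s \<and> s ! (j - 1) = False)"

definition vanishes_at_e2 :: "nat \<Rightarrow> fstate \<Rightarrow> bool" where
  "vanishes_at_e2 j f \<longleftrightarrow> (\<forall>a s. j - 1 < length s \<longrightarrow> s ! (j - 1) \<longrightarrow> f (a, s) = 0)"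

lemma vanishes_at_e2_Rsite: "vanishes_at_e2 j f \<Longrightarrow> k \<ge> 1 \<Longrightarrow> j \<ge> 1 \<Longrightarrow> k \<noteq> j \<Longrightarrow> vanishes_at_e2 j (Rsite \<gamma> x k f)"
  unfolding vanishes_at_e2_def Rsite_def by (auto simp: nth_list_update_neq)

lemma vanishes_at_e2_Kop: "vanishes_at_e2 j f \<Longrightarrow> vanishes_at_e2 j (Kop h x f)"
  unfolding vanishes_at_e2_def Kop_def by auto

lemma vanishes_at_e2_double_row: "vanishes_at_e2 j f \<Longrightarrow> j \<ge> 1 \<Longrightarrow> j \<notin> set js \<Longrightarrow> \<forall>k\<in>set js. k \<ge> 1 \<Longrightarrow> vanishes_at_e2 j (double_row \<gamma> h \<mu> x js f)"
proof (induction js arbitrary: f)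
  case Nil
  then show ?case by (simp add: vanishes_at_e2_Kop)
next
  case (Cons k js)
  have "vanishes_at_e2 j (Rsite \<gamma> (x + \<mu> k) k f)" using Cons.prems by (intro vanishes_at_e2_Rsite) auto
  then have "vanishes_at_e2 j (double_row \<gamma> h \<mu> x js (Rsite \<gamma> (x + \<mu> k) k f))" using Cons by simp
  then have "vanishes_at_e2 j (Rsite \<gamma> (x - \<mu> k) k (double_row \<gamma> h \<mu> x js (Rsite \<gamma> (x + \<mu> k) k f)))" using Cons.prems by (intro vanishes_at_e2_Rsite) auto
  then show ?case by simp
qed

lemma Rsite_aux_e1:
  assumes "supported_e1 j \<omega>"
  shows "Rsite \<gamma> x j (\<lambda>(a, s). if a then 0 else \<omega> s) = (\<lambda>(a, s). if a then 0 else wa \<gamma> x * \<omega> s)"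
proof (rule ext, clarify)
  fix a s
  have w: "\<omega> s' = 0" if "\<not> (j - 1 < length s' \<and> s' ! (j - 1) = False)" for s'
    using assms that unfolding supported_e1_def by blast
  show "Rsite \<gamma> x j (\<lambda>(a, s). if a then 0 else \<omega> s) (a, s) = (if a then 0 else wa \<gamma> x * \<omega> s)"
  proof (cases "j - 1 < length s")
    case True
    then show ?thesis
      by (cases a; cases "s ! (j - 1)") (auto simp: Rsite_def sum_UNIV_bool Rent_def w list_update_same_nth)
  next
    case False
    then show ?thesis by (simp add: Rsite_def w)
  qed
qed

definition lower_at :: "nat \<Rightarrow> qstate \<Rightarrow> qstate" where
  "lower_at j \<omega> s = (if j - 1 < length s \<and> s ! (j - 1) then \<omega> (s[j - 1 := False]) else 0)"

lemma Rsite_aux_e2: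
  assumes "supported_e1 j \<omega>"
  shows "Rsite \<gamma> x j (\<lambda>(a, s). if a then \<omega> s else 0)
    = (\<lambda>z. wb x * (\<lambda>(a, s). if a then \<omega> s else 0) z + wc \<gamma> * (\<lambda>(a, s). if a then 0 else lower_at j \<omega> s) z)"
proof (rule ext, clarify)
  fix a s
  have w: "\<omega> s' = 0" if "\<not> (j - 1 < length s' \<and> s' ! (j - 1) = False)" for s'
    using assms that unfolding supported_e1_def by blast
  show "Rsite \<gamma> x j (\<lambda>(a, s). if a then \<omega> s else 0) (a, s) =
     wb x * (if a then \<omega> s else 0) + wc \<gamma> * (if a then 0 else lower_at j \<omega> s)"
  proof (cases "j - 1 < length s")
    case True
    then show ?thesis
      by (cases a; cases "s ! (j - 1)") (auto simp: Rsite_def sum_UNIV_bool Rent_def w list_update_same_nth lower_at_def)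
  next
    case False
    then show ?thesis by (simp add: Rsite_def w lower_at_def)
  qed
qed

lemma supported_e1_lower_at: "supported_e1 k \<omega> \<Longrightarrow> k \<ge> 1 \<Longrightarrow> j \<ge> 1 \<Longrightarrow> k \<noteq> j \<Longrightarrow> supported_e1 k (lower_at j \<omega>)"
  unfolding supported_e1_def lower_at_def
  by (auto simp: nth_list_update_neq split: if_splits)

fun vac_A_eigen :: "complex \<Rightarrow> complex \<Rightarrow> (nat \<Rightarrow> complex) \<Rightarrow> complex \<Rightarrow> nat list \<Rightarrow> complex" where
  "vac_A_eigen \<gamma> h \<mu> x [] = sinh (h + x)"
| "vac_A_eigen \<gamma> h \<mu> x (j # js) = wa \<gamma> (x - \<mu> j) * wa \<gamma> (x + \<mu> j) * vac_A_eigen \<gamma> h \<mu> x js"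

fun vac_D_eigen :: "complex \<Rightarrow> complex \<Rightarrow> (nat \<Rightarrow> complex) \<Rightarrow> complex \<Rightarrow> nat list \<Rightarrow> complex" where
  "vac_D_eigen \<gamma> h \<mu> x [] = sinh (h - x)"
| "vac_D_eigen \<gamma> h \<mu> x (j # js) = wb (x - \<mu> j) * wb (x + \<mu> j) * vac_D_eigen \<gamma> h \<mu> x js + wc \<gamma> * wc \<gamma> * vac_A_eigen \<gamma> h \<mu> x js"

definition vac_Dt_eigen :: "complex \<Rightarrow> complex \<Rightarrow> (nat \<Rightarrow> complex) \<Rightarrow> complex \<Rightarrow> nat list \<Rightarrow> complex" where
  "vac_Dt_eigen \<gamma> h \<mu> x js = wa \<gamma> (2 * x) * vac_D_eigen \<gamma> h \<mu> x js - wc \<gamma> * vac_A_eigen \<gamma> h \<mu> x js"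

lemma supported_e1_vac: "k \<in> {1..L} \<Longrightarrow> supported_e1 k (vac L)"
  unfolding supported_e1_def vac_def by auto

lemma double_row_vacuum_A:
  assumes "distinct js" "\<forall>k\<in>set js. k \<ge> 1" "\<forall>k\<in>set js. supported_e1 k \<omega>"
  shows "double_row \<gamma> h \<mu> x js (\<lambda>(a, s). if a then 0 else \<omega> s)
    = (\<lambda>(a, s). if a then 0 else vac_A_eigen \<gamma> h \<mu> x js * \<omega> s)"
  using assms
proof (induction js)
  case Nil
  show ?case by (auto simp: Kop_def fun_eq_iff)
next
  case (Cons j js)
  let ?F0 = "(\<lambda>(a, s). if a then 0 else \<omega> s) :: fstate"
  have \<omega>_j: "supported_e1 j \<omega>" and IH: "double_row \<gamma> h \<mu> x js ?F0 = (\<lambda>(a, s). if a then 0 else vac_A_eigen \<gamma> h \<mu> x js * \<omega> s)"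
    using Cons by auto
  have scale: "(\<lambda>(a, s). if a then 0 else k * \<omega> s) = (\<lambda>z. k * ?F0 z)" for k
    by (auto simp: fun_eq_iff)
  have "double_row \<gamma> h \<mu> x (j # js) ?F0 = Rsite \<gamma> (x - \<mu> j) j (double_row \<gamma> h \<mu> x js (\<lambda>z. wa \<gamma> (x + \<mu> j) * ?F0 z))"
    by (simp only: double_row.simps comp_apply Rsite_aux_e1[OF \<omega>_j] scale)
  also have "\<dots> = Rsite \<gamma> (x - \<mu> j) j (\<lambda>z. (wa \<gamma> (x + \<mu> j) * vac_A_eigen \<gamma> h \<mu> x js) * ?F0 z)"
    by (simp only: linear_op_scale[OF linear_double_row] IH scale mult.assoc)
  also have "\<dots> = (\<lambda>(a, s). if a then 0 else vac_A_eigen \<gamma> h \<mu> x (j # js) * \<omega> s)"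
    by (simp only: linear_op_scale[OF linear_Rsite] Rsite_aux_e1[OF \<omega>_j]) (auto simp: fun_eq_iff)
  finally show ?case .
qed

lemma Rsite_aux_e2_True:
  assumes \<omega>: "supported_e1 j \<omega>"
    and up: "\<And>s. \<Phi> (True, s) = d * \<omega> s"
    and down: "\<And>s. j - 1 < length s \<Longrightarrow> s ! (j - 1) \<Longrightarrow> \<Phi> (False, s) = e * lower_at j \<omega> s"
  shows "Rsite \<gamma> x j \<Phi> (True, s) = (wb x * d + wc \<gamma> * e) * \<omega> s"
proof -
  have w: "\<omega> s' = 0" if "\<not> (j - 1 < length s' \<and> s' ! (j - 1) = False)" for s'
    using \<omega> that unfolding supported_e1_def by blast
  show ?thesis
  proof (cases "j - 1 < length s")
    case in_range: True
    show ?thesis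
    proof (cases "s ! (j - 1)")
      case True
      then show ?thesis using in_range
        by (simp add: Rsite_def sum_UNIV_bool Rent_def up w list_update_same_nth)
    next
      case False
      then have "s[j - Suc 0 := False] = s" using in_range by (simp add: list_update_same_nth)
      moreover have "\<Phi> (False, s[j - Suc 0 := True]) = e * \<omega> s"
        using down[of "s[j - 1 := True]"] in_range \<open>s[j - Suc 0 := False] = s\<close> by (simp add: lower_at_def)
      ultimately show ?thesis using False in_range
        by (simp add: Rsite_def sum_UNIV_bool Rent_def up algebra_simps)
    qed
  next
    case False
    then show ?thesis by (simp add: Rsite_def up w)
  qed
qed

lemma double_row_vacuum_D:
  assumes "distinct js" "\<forall>k\<in>set js. k \<ge> 1" "\<forall>k\<in>set js. supported_e1 k \<omega>"
  shows "double_row \<gamma> h \<mu> x js (\<lambda>(a, s). if a then \<omega> s else 0) (True, s) = vac_D_eigen \<gamma> h \<mu> x js * \<omega> s"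
  using assms
proof (induction js arbitrary: s)
  case Nil
  show ?case by (simp add: Kop_def)
next
  case (Cons j js)
  have j1: "j \<ge> 1" and jn: "j \<notin> set js" and dj: "distinct js" and p1: "\<forall>k\<in>set js. k \<ge> 1"
    and \<omega>_j: "supported_e1 j \<omega>" and \<omega>_js: "\<forall>k\<in>set js. supported_e1 k \<omega>"
    using Cons.prems by auto
  let ?F1 = "(\<lambda>(a, s). if a then \<omega> s else 0) :: fstate"
  let ?Ft = "(\<lambda>(a, s). if a then 0 else lower_at j \<omega> s) :: fstate"
  define \<Phi> where "\<Phi> = (\<lambda>z. wb (x + \<mu> j) * double_row \<gamma> h \<mu> x js ?F1 z + wc \<gamma> * double_row \<gamma> h \<mu> x js ?Ft z)"
  have "double_row \<gamma> h \<mu> x js (Rsite \<gamma> (x + \<mu> j) j ?F1) = \<Phi>"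
    unfolding \<Phi>_def Rsite_aux_e2[OF \<omega>_j] by (simp only: linear_op_add[OF linear_double_row] linear_op_scale[OF linear_double_row])
  then have "double_row \<gamma> h \<mu> x (j # js) ?F1 (True, s) = Rsite \<gamma> (x - \<mu> j) j \<Phi> (True, s)"
    by simp
  also have "\<dots> = (wb (x - \<mu> j) * (wb (x + \<mu> j) * vac_D_eigen \<gamma> h \<mu> x js) + wc \<gamma> * (wc \<gamma> * vac_A_eigen \<gamma> h \<mu> x js)) * \<omega> s"
  proof (rule Rsite_aux_e2_True[OF \<omega>_j])
    have "\<forall>k\<in>set js. supported_e1 k (lower_at j \<omega>)"
      using \<omega>_js p1 j1 jn by (metis supported_e1_lower_at)
    note lowered = double_row_vacuum_A[OF dj p1 this]
    show "\<Phi> (True, s') = wb (x + \<mu> j) * vac_D_eigen \<gamma> h \<mu> x js * \<omega> s'" for s'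
      using Cons.IH[OF dj p1 \<omega>_js] lowered unfolding \<Phi>_def by simp
    have "vanishes_at_e2 j ?F1"
      using \<omega>_j unfolding vanishes_at_e2_def supported_e1_def by auto
    then have "vanishes_at_e2 j (double_row \<gamma> h \<mu> x js ?F1)"
      by (rule vanishes_at_e2_double_row[OF _ j1 jn p1])
    then show "\<Phi> (False, s') = wc \<gamma> * vac_A_eigen \<gamma> h \<mu> x js * lower_at j \<omega> s'"
      if "j - 1 < length s'" "s' ! (j - 1)" for s'
      using that lowered unfolding \<Phi>_def vanishes_at_e2_def by simp
  qed
  also have "\<dots> = vac_D_eigen \<gamma> h \<mu> x (j # js) * \<omega> s"
    by (simp add: algebra_simps)
  finally show ?case .
qed

section \<open>Algebraic Bethe ansatz\<close>

definition kAA :: "complex \<Rightarrow> complex \<Rightarrow> complex \<Rightarrow> complex" where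
  "kAA g l y = wc g * wb (2 * y) / (wb (l - y) * wa g (2 * y))"
definition kAD :: "complex \<Rightarrow> complex \<Rightarrow> complex \<Rightarrow> complex" where
  "kAD g l y = - wc g / (wa g (l + y) * wa g (2 * y))"
definition kDA :: "complex \<Rightarrow> complex \<Rightarrow> complex \<Rightarrow> complex" where
  "kDA g l y = wc g * wa g (2 * l + g) * wb (2 * y) / (wa g (l + y) * wa g (2 * y))"
definition kDD :: "complex \<Rightarrow> complex \<Rightarrow> complex \<Rightarrow> complex" where
  "kDD g l y = - wc g * wa g (2 * l + g) / (wb (l - y) * wa g (2 * y))"

lemma kAA_Cons:
  assumes n: "wa g (2 * w) \<noteq> 0" "wa g (2 * y) \<noteq> 0" "wa g (l + w) \<noteq> 0" "wa g (w + y) \<noteq> 0"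
    "wa g (l + y) \<noteq> 0" "wb (l - w) \<noteq> 0" "wb (l - y) \<noteq> 0" "wb (w - y) \<noteq> 0"
  shows "kAA g l y * F1 g w y = F1 g w l * kAA g l y + kAA g l w * kAA g w y + kAD g l w * kDA g w y"
proof -
  have ee1: "wb (w - l) = - wb (l - w)" "wb (y - w) = - wb (w - y)" by (rule wb_minus_commute)+
  have ee2: "wa g (w + l) = wa g (l + w)" "wb (w + l) = wb (l + w)"
    "wb (y + w + g) = wa g (w + y)" "wb (l + w + g) = wa g (l + w)"
    by (simp_all add: wa_def wb_def add_ac)
  note ee = ee1 ee2
  have p: "wa g (2 * w) * wa g (l + w) * wa g (w - y) * wb (l - w) * wb (w + y) = - wa g (2 * w) * wa g (w + y) * wa g (w - l) * wb (l + w) * wb (w - y) + wa g (l + w) * wa g (w + y) * wb (2 * w) * wb (l - y) * wc g - wa g (2 * w + g) * wb (l - w) * wb (l - y) * wb (w - y) * wc g"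
    unfolding wa_def wb_def wc_def mult_2 sinh_field_def
    by (simp only: exp_add exp_diff exp_minus) (simp add: field_simps, (simp add: algebra_simps)?)
  define D where "D = wa g (2 * w) * wa g (2 * y) * wa g (l + w) * wa g (w + y) * wb (l - w) * wb (l - y) * wb (w - y)"
  have D0: "D \<noteq> 0" using n unfolding D_def by simp
  have d0: "D * (kAA g l y * F1 g w y) = wa g (2 * w) * wa g (l + w) * wa g (w - y) * wb (2 * y) * wb (l - w) * wb (w + y) * wc g"
    unfolding D_def kAA_def kAD_def kDA_def kDD_def F1_def F2_def ee using n by (simp add: field_simps)
  have d1: "D * (F1 g w l * kAA g l y) = - wa g (2 * w) * wa g (w + y) * wa g (w - l) * wb (2 * y) * wb (l + w) * wb (w - y) * wc g"
    unfolding D_def kAA_def kAD_def kDA_def kDD_def F1_def F2_def ee using n by (simp add: field_simps)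
  have d2: "D * (kAA g l w * kAA g w y) = wa g (l + w) * wa g (w + y) * wb (2 * w) * wb (2 * y) * wb (l - y) * wc g * wc g"
    unfolding D_def kAA_def kAD_def kDA_def kDD_def F1_def F2_def ee using n by (simp add: field_simps)
  have d3: "D * (kAD g l w * kDA g w y) = - wa g (2 * w + g) * wb (2 * y) * wb (l - w) * wb (l - y) * wb (w - y) * wc g * wc g"
    unfolding D_def kAA_def kAD_def kDA_def kDD_def F1_def F2_def ee using n by (simp add: field_simps)
  have "D * (kAA g l y * F1 g w y) = D * (F1 g w l * kAA g l y + kAA g l w * kAA g w y + kAD g l w * kDA g w y)"
    unfolding distrib_left d0 d1 d2 d3 using arg_cong[OF p, of "\<lambda>t. (wb (2 * y) * wc g) * t"] by (simp add: algebra_simps)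
  then show ?thesis using D0 by simp
qed

lemma kAD_Cons:
  assumes n: "wa g (2 * w) \<noteq> 0" "wa g (2 * y) \<noteq> 0" "wa g (l + w) \<noteq> 0" "wa g (w + y) \<noteq> 0"
    "wa g (l + y) \<noteq> 0" "wb (l - w) \<noteq> 0" "wb (l - y) \<noteq> 0" "wb (w - y) \<noteq> 0"
  shows "kAD g l y * F2 g y w = F1 g w l * kAD g l y + kAA g l w * kAD g w y + kAD g l w * kDD g w y"
proof -
  have ee1: "wb (w - l) = - wb (l - w)" "wb (y - w) = - wb (w - y)" by (rule wb_minus_commute)+
  have ee2: "wa g (w + l) = wa g (l + w)" "wb (w + l) = wb (l + w)"
    "wb (y + w + g) = wa g (w + y)" "wb (l + w + g) = wa g (l + w)"
    by (simp_all add: wa_def wb_def add_ac)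
  note ee = ee1 ee2
  have p: "wa g (2 * w) * wa g (l + w) * wa g (y + w + g) * wa g (y - w) * wb (l - w) = wa g (2 * w) * wa g (w + y) * wa g (w - l) * wb (l + w) * wb (w - y) - wa g (l + w) * wa g (l + y) * wb (2 * w) * wb (w - y) * wc g + wa g (2 * w + g) * wa g (l + y) * wa g (w + y) * wb (l - w) * wc g"
    unfolding wa_def wb_def wc_def mult_2 sinh_field_def
    by (simp only: exp_add exp_diff exp_minus) (simp add: field_simps, (simp add: algebra_simps)?)
  define D where "D = wa g (2 * w) * wa g (2 * y) * wa g (l + w) * wa g (l + y) * wa g (w + y) * wb (l - w) * wb (w - y)"
  have D0: "D \<noteq> 0" using n unfolding D_def by simp
  have d0: "D * (kAD g l y * F2 g y w) = wa g (2 * w) * wa g (l + w) * wa g (y + w + g) * wa g (y - w) * wb (l - w) * wc g"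
    unfolding D_def kAA_def kAD_def kDA_def kDD_def F1_def F2_def ee using n by (simp add: field_simps)
  have d1: "D * (F1 g w l * kAD g l y) = wa g (2 * w) * wa g (w + y) * wa g (w - l) * wb (l + w) * wb (w - y) * wc g"
    unfolding D_def kAA_def kAD_def kDA_def kDD_def F1_def F2_def ee using n by (simp add: field_simps)
  have d2: "D * (kAA g l w * kAD g w y) = - wa g (l + w) * wa g (l + y) * wb (2 * w) * wb (w - y) * wc g * wc g"
    unfolding D_def kAA_def kAD_def kDA_def kDD_def F1_def F2_def ee using n by (simp add: field_simps)
  have d3: "D * (kAD g l w * kDD g w y) = wa g (2 * w + g) * wa g (l + y) * wa g (w + y) * wb (l - w) * wc g * wc g"
    unfolding D_def kAA_def kAD_def kDA_def kDD_def F1_def F2_def ee using n by (simp add: field_simps)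
  have "D * (kAD g l y * F2 g y w) = D * (F1 g w l * kAD g l y + kAA g l w * kAD g w y + kAD g l w * kDD g w y)"
    unfolding distrib_left d0 d1 d2 d3 using arg_cong[OF p, of "\<lambda>t. (wc g) * t"] by (simp add: algebra_simps)
  then show ?thesis using D0 by simp
qed

lemma kDA_Cons:
  assumes n: "wa g (2 * w) \<noteq> 0" "wa g (2 * y) \<noteq> 0" "wa g (l + w) \<noteq> 0" "wa g (w + y) \<noteq> 0"
    "wa g (l + y) \<noteq> 0" "wb (l - w) \<noteq> 0" "wb (l - y) \<noteq> 0" "wb (w - y) \<noteq> 0"
  shows "kDA g l y * F1 g w y = F2 g l w * kDA g l y + kDD g l w * kDA g w y + kDA g l w * kAA g w y"
proof -
  have ee1: "wb (w - l) = - wb (l - w)" "wb (y - w) = - wb (w - y)" by (rule wb_minus_commute)+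
  have ee2: "wa g (w + l) = wa g (l + w)" "wb (w + l) = wb (l + w)"
    "wb (y + w + g) = wa g (w + y)" "wb (l + w + g) = wa g (l + w)"
    by (simp_all add: wa_def wb_def add_ac)
  note ee = ee1 ee2
  have p: "wa g (2 * w) * wa g (l + w) * wa g (w - y) * wb (l - w) * wb (w + y) = wa g (2 * w) * wa g (l + w + g) * wa g (l - w) * wa g (w + y) * wb (w - y) - wa g (2 * w + g) * wa g (l + w) * wa g (l + y) * wb (w - y) * wc g + wa g (l + y) * wa g (w + y) * wb (2 * w) * wb (l - w) * wc g"
    unfolding wa_def wb_def wc_def mult_2 sinh_field_def
    by (simp only: exp_add exp_diff exp_minus) (simp add: field_simps, (simp add: algebra_simps)?)
  define D where "D = wa g (2 * w) * wa g (2 * y) * wa g (l + w) * wa g (l + y) * wa g (w + y) * wb (l - w) * wb (w - y)"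
  have D0: "D \<noteq> 0" using n unfolding D_def by simp
  have d0: "D * (kDA g l y * F1 g w y) = wa g (2 * l + g) * wa g (2 * w) * wa g (l + w) * wa g (w - y) * wb (2 * y) * wb (l - w) * wb (w + y) * wc g"
    unfolding D_def kAA_def kAD_def kDA_def kDD_def F1_def F2_def ee using n by (simp add: field_simps)
  have d1: "D * (F2 g l w * kDA g l y) = wa g (2 * l + g) * wa g (2 * w) * wa g (l + w + g) * wa g (l - w) * wa g (w + y) * wb (2 * y) * wb (w - y) * wc g"
    unfolding D_def kAA_def kAD_def kDA_def kDD_def F1_def F2_def ee using n by (simp add: field_simps)
  have d2: "D * (kDD g l w * kDA g w y) = - wa g (2 * l + g) * wa g (2 * w + g) * wa g (l + w) * wa g (l + y) * wb (2 * y) * wb (w - y) * wc g * wc g"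
    unfolding D_def kAA_def kAD_def kDA_def kDD_def F1_def F2_def ee using n by (simp add: field_simps)
  have d3: "D * (kDA g l w * kAA g w y) = wa g (2 * l + g) * wa g (l + y) * wa g (w + y) * wb (2 * w) * wb (2 * y) * wb (l - w) * wc g * wc g"
    unfolding D_def kAA_def kAD_def kDA_def kDD_def F1_def F2_def ee using n by (simp add: field_simps)
  have "D * (kDA g l y * F1 g w y) = D * (F2 g l w * kDA g l y + kDD g l w * kDA g w y + kDA g l w * kAA g w y)"
    unfolding distrib_left d0 d1 d2 d3 using arg_cong[OF p, of "\<lambda>t. (wa g (2 * l + g) * wb (2 * y) * wc g) * t"] by (simp add: algebra_simps)
  then show ?thesis using D0 by simp
qed

lemma kDD_Cons:
  assumes n: "wa g (2 * w) \<noteq> 0" "wa g (2 * y) \<noteq> 0" "wa g (l + w) \<noteq> 0" "wa g (w + y) \<noteq> 0"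
    "wa g (l + y) \<noteq> 0" "wb (l - w) \<noteq> 0" "wb (l - y) \<noteq> 0" "wb (w - y) \<noteq> 0"
  shows "kDD g l y * F2 g y w = F2 g l w * kDD g l y + kDD g l w * kDD g w y + kDA g l w * kAD g w y"
proof -
  have ee1: "wb (w - l) = - wb (l - w)" "wb (y - w) = - wb (w - y)" by (rule wb_minus_commute)+
  have ee2: "wa g (w + l) = wa g (l + w)" "wb (w + l) = wb (l + w)"
    "wb (y + w + g) = wa g (w + y)" "wb (l + w + g) = wa g (l + w)"
    by (simp_all add: wa_def wb_def add_ac)
  note ee = ee1 ee2
  have p: "wa g (2 * w) * wa g (l + w) * wa g (y + w + g) * wa g (y - w) * wb (l - w) = - wa g (2 * w) * wa g (l + w + g) * wa g (l - w) * wa g (w + y) * wb (w - y) + wa g (2 * w + g) * wa g (l + w) * wa g (w + y) * wb (l - y) * wc g - wb (2 * w) * wb (l - w) * wb (l - y) * wb (w - y) * wc g"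
    unfolding wa_def wb_def wc_def mult_2 sinh_field_def
    by (simp only: exp_add exp_diff exp_minus) (simp add: field_simps, (simp add: algebra_simps)?)
  define D where "D = wa g (2 * w) * wa g (2 * y) * wa g (l + w) * wa g (w + y) * wb (l - w) * wb (l - y) * wb (w - y)"
  have D0: "D \<noteq> 0" using n unfolding D_def by simp
  have d0: "D * (kDD g l y * F2 g y w) = wa g (2 * l + g) * wa g (2 * w) * wa g (l + w) * wa g (y + w + g) * wa g (y - w) * wb (l - w) * wc g"
    unfolding D_def kAA_def kAD_def kDA_def kDD_def F1_def F2_def ee using n by (simp add: field_simps)
  have d1: "D * (F2 g l w * kDD g l y) = - wa g (2 * l + g) * wa g (2 * w) * wa g (l + w + g) * wa g (l - w) * wa g (w + y) * wb (w - y) * wc g"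
    unfolding D_def kAA_def kAD_def kDA_def kDD_def F1_def F2_def ee using n by (simp add: field_simps)
  have d2: "D * (kDD g l w * kDD g w y) = wa g (2 * l + g) * wa g (2 * w + g) * wa g (l + w) * wa g (w + y) * wb (l - y) * wc g * wc g"
    unfolding D_def kAA_def kAD_def kDA_def kDD_def F1_def F2_def ee using n by (simp add: field_simps)
  have d3: "D * (kDA g l w * kAD g w y) = - wa g (2 * l + g) * wb (2 * w) * wb (l - w) * wb (l - y) * wb (w - y) * wc g * wc g"
    unfolding D_def kAA_def kAD_def kDA_def kDD_def F1_def F2_def ee using n by (simp add: field_simps)
  have "D * (kDD g l y * F2 g y w) = D * (F2 g l w * kDD g l y + kDD g l w * kDD g w y + kDA g l w * kAD g w y)"
    unfolding distrib_left d0 d1 d2 d3 using arg_cong[OF p, of "\<lambda>t. (wa g (2 * l + g) * wc g) * t"] by (simp add: algebra_simps)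
  then show ?thesis using D0 by simp
qed

definition del_nth :: "'a list \<Rightarrow> nat \<Rightarrow> 'a list" where
  "del_nth Y k = take k Y @ drop (Suc k) Y"

lemma del_nth_Cons_0[simp]: "del_nth (w # Z) 0 = Z" by (simp add: del_nth_def)
lemma del_nth_Cons_Suc[simp]: "del_nth (w # Z) (Suc k) = w # del_nth Z k" by (simp add: del_nth_def)

lemma sum_del_nth_Cons:
  "(\<Sum>k<length (w # Z). f ((w # Z) ! k) (del_nth (w # Z) k))
    = f w Z + (\<Sum>k<length Z. f (Z ! k) (w # del_nth Z k))"
  unfolding length_Cons sum.lessThan_Suc_shift by simp

lemma prod_list_map_nth: "prod_list (map f xs) = (\<Prod>k<length xs. f (xs ! k))"
  by (simp add: prod.list_conv_set_nth atLeast0LessThan)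

lemma prod_list_del_nth: "k < length ws \<Longrightarrow> prod_list (map f (del_nth ws k)) = (\<Prod>j\<in>{..<length ws} - {k}. f (ws ! j))"
proof (induction ws arbitrary: k)
  case Nil
  then show ?case by simp
next
  case (Cons z ws)
  show ?case
  proof (cases k)
    case 0
    have e: "{..<Suc (length ws)} - {0} = Suc ` {..<length ws}"
      by (auto simp: lessThan_Suc_eq_insert_0)
    show ?thesis unfolding 0 by (simp add: e prod.reindex prod_list_map_nth)
  next
    case (Suc k')
    have k': "k' < length ws" using Cons.prems Suc by simp
    have e: "{..<Suc (length ws)} - {Suc k'} = insert 0 (Suc ` ({..<length ws} - {k'}))"
      by (auto simp: lessThan_Suc_eq_insert_0)
    show ?thesis unfolding Suc using Cons.IH[OF k'] by (simp add: e prod.reindex)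
  qed
qed

locale bethe_ansatz =
  fixes g :: complex and A B Dt :: "complex \<Rightarrow> qstate \<Rightarrow> qstate" and al de :: "complex \<Rightarrow> complex" and v0 :: qstate
  assumes linA: "linear_op (A x)" and linB: "linear_op (B x)" and linD: "linear_op (Dt x)"
    and B_commute: "B x (B y \<phi>) = B y (B x \<phi>)"
    and A_B_exchange: "wb (x - y) * wa g (x + y) * wa g (2 * y) * A x (B y \<phi>) s =
      - wa g (y - x) * wb (x + y) * wa g (2 * y) * B y (A x \<phi>) s
      + wc g * wb (2 * y) * wa g (x + y) * B x (A y \<phi>) s
      - wc g * wb (x - y) * B x (Dt y \<phi>) s"
    and Dt_B_exchange: "wb (x - y) * wa g (x + y) * wa g (2 * y) * Dt x (B y \<phi>) s =
      wa g (x - y) * wa g (x + y + g) * wa g (2 * y) * B y (Dt x \<phi>) s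
      - wc g * wa g (2 * x + g) * wa g (x + y) * B x (Dt y \<phi>) s
      + wc g * wa g (2 * x + g) * wb (2 * y) * wb (x - y) * B x (A y \<phi>) s"
    and vA: "A x v0 = (\<lambda>s. al x * v0 s)" and vD: "Dt x v0 = (\<lambda>s. de x * v0 s)"
begin

definition generic_pair :: "complex \<Rightarrow> complex \<Rightarrow> bool" where
  "generic_pair x y \<longleftrightarrow> wb (x - y) \<noteq> 0 \<and> wa g (x + y) \<noteq> 0 \<and> wa g (2 * y) \<noteq> 0"

definition bethe :: "complex list \<Rightarrow> qstate" where "bethe Y = foldr B Y v0"
definition prodF1 :: "complex list \<Rightarrow> complex \<Rightarrow> complex" where "prodF1 Z y = prod_list (map (\<lambda>z. F1 g z y) Z)"
definition prodF2 :: "complex \<Rightarrow> complex list \<Rightarrow> complex" where "prodF2 y Z = prod_list (map (\<lambda>z. F2 g y z) Z)"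
definition coefA :: "complex \<Rightarrow> complex \<Rightarrow> complex list \<Rightarrow> complex" where
  "coefA x y Z = kAA g x y * al y * prodF1 Z y + kAD g x y * de y * prodF2 y Z"
definition coefD :: "complex \<Rightarrow> complex \<Rightarrow> complex list \<Rightarrow> complex" where
  "coefD x y Z = kDA g x y * al y * prodF1 Z y + kDD g x y * de y * prodF2 y Z"

lemma bethe_Cons[simp]: "bethe (w # Z) = B w (bethe Z)" by (simp add: bethe_def)
lemma prodF1_Cons[simp]: "prodF1 (w # Z) y = F1 g w y * prodF1 Z y" by (simp add: prodF1_def)
lemma prodF2_Cons[simp]: "prodF2 y (w # Z) = F2 g y w * prodF2 y Z" by (simp add: prodF2_def)

lemma A_B_exchange_solved:
  assumes "generic_pair x y"
  shows "A x (B y \<phi>) s = F1 g y x * B y (A x \<phi>) s + kAA g x y * B x (A y \<phi>) s + kAD g x y * B x (Dt y \<phi>) s"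
proof -
  have n: "wb (x - y) \<noteq> 0" "wa g (x + y) \<noteq> 0" "wa g (2 * y) \<noteq> 0" using assms unfolding generic_pair_def by auto
  have e: "wb (y - x) = - wb (x - y)" "wb (y + x) = wb (x + y)" "wa g (y + x) = wa g (x + y)"
    by (rule wb_minus_commute) (simp_all add: add.commute)
  have "wb (x - y) * wa g (x + y) * wa g (2 * y) * A x (B y \<phi>) s
     = wb (x - y) * wa g (x + y) * wa g (2 * y) * (F1 g y x * B y (A x \<phi>) s + kAA g x y * B x (A y \<phi>) s + kAD g x y * B x (Dt y \<phi>) s)"
    unfolding A_B_exchange F1_def kAA_def kAD_def e using n by (simp add: field_simps)
  then show ?thesis using n by simp
qed

lemma Dt_B_exchange_solved:
  assumes "generic_pair x y"
  shows "Dt x (B y \<phi>) s = F2 g x y * B y (Dt x \<phi>) s + kDD g x y * B x (Dt y \<phi>) s + kDA g x y * B x (A y \<phi>) s"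
proof -
  have n: "wb (x - y) \<noteq> 0" "wa g (x + y) \<noteq> 0" "wa g (2 * y) \<noteq> 0" using assms unfolding generic_pair_def by auto
  have e: "wb (x + y + g) = wa g (x + y)" by (simp add: wa_def wb_def)
  have "wb (x - y) * wa g (x + y) * wa g (2 * y) * Dt x (B y \<phi>) s
     = wb (x - y) * wa g (x + y) * wa g (2 * y) * (F2 g x y * B y (Dt x \<phi>) s + kDD g x y * B x (Dt y \<phi>) s + kDA g x y * B x (A y \<phi>) s)"
    unfolding Dt_B_exchange F2_def kDA_def kDD_def e using n by (simp add: field_simps)
  then show ?thesis using n by simp
qed

lemma generic_triple_nonzero:
  assumes "generic_pair l w" "generic_pair l y" "generic_pair w y"
  shows "wa g (2 * w) \<noteq> 0" "wa g (2 * y) \<noteq> 0" "wa g (l + w) \<noteq> 0" "wa g (w + y) \<noteq> 0"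
    "wa g (l + y) \<noteq> 0" "wb (l - w) \<noteq> 0" "wb (l - y) \<noteq> 0" "wb (w - y) \<noteq> 0"
  using assms unfolding generic_pair_def by auto

lemma coefA_Cons:
  assumes "generic_pair x w" "generic_pair x z" "generic_pair w z"
  shows "coefA x z (w # Z) = F1 g w x * coefA x z Z + kAA g x w * coefA w z Z + kAD g x w * coefD w z Z"
proof -
  note t1 = kAA_Cons[OF generic_triple_nonzero[OF assms]]
  note t2 = kAD_Cons[OF generic_triple_nonzero[OF assms]]
  show ?thesis unfolding coefA_def coefD_def prodF1_Cons prodF2_Cons
  proof -
    have "kAA g x z * al z * (F1 g w z * prodF1 Z z) + kAD g x z * de z * (F2 g z w * prodF2 z Z)
      = (kAA g x z * F1 g w z) * al z * prodF1 Z z + (kAD g x z * F2 g z w) * de z * prodF2 z Z" by (simp add: algebra_simps)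
    also have "\<dots> = (F1 g w x * kAA g x z + kAA g x w * kAA g w z + kAD g x w * kDA g w z) * al z * prodF1 Z z
       + (F1 g w x * kAD g x z + kAA g x w * kAD g w z + kAD g x w * kDD g w z) * de z * prodF2 z Z"
      by (simp only: t1 t2)
    also have "\<dots> = F1 g w x * (kAA g x z * al z * prodF1 Z z + kAD g x z * de z * prodF2 z Z) +
      kAA g x w * (kAA g w z * al z * prodF1 Z z + kAD g w z * de z * prodF2 z Z) +
      kAD g x w * (kDA g w z * al z * prodF1 Z z + kDD g w z * de z * prodF2 z Z)" by (simp add: algebra_simps)
    finally show "kAA g x z * al z * (F1 g w z * prodF1 Z z) + kAD g x z * de z * (F2 g z w * prodF2 z Z) =
      F1 g w x * (kAA g x z * al z * prodF1 Z z + kAD g x z * de z * prodF2 z Z) +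
      kAA g x w * (kAA g w z * al z * prodF1 Z z + kAD g w z * de z * prodF2 z Z) +
      kAD g x w * (kDA g w z * al z * prodF1 Z z + kDD g w z * de z * prodF2 z Z)" .
  qed
qed

lemma coefD_Cons:
  assumes "generic_pair x w" "generic_pair x z" "generic_pair w z"
  shows "coefD x z (w # Z) = F2 g x w * coefD x z Z + kDD g x w * coefD w z Z + kDA g x w * coefA w z Z"
proof -
  note t3 = kDA_Cons[OF generic_triple_nonzero[OF assms]]
  note t4 = kDD_Cons[OF generic_triple_nonzero[OF assms]]
  show ?thesis unfolding coefA_def coefD_def prodF1_Cons prodF2_Cons
  proof -
    have "kDA g x z * al z * (F1 g w z * prodF1 Z z) + kDD g x z * de z * (F2 g z w * prodF2 z Z)
      = (kDA g x z * F1 g w z) * al z * prodF1 Z z + (kDD g x z * F2 g z w) * de z * prodF2 z Z" by (simp add: algebra_simps)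
    also have "\<dots> = (F2 g x w * kDA g x z + kDD g x w * kDA g w z + kDA g x w * kAA g w z) * al z * prodF1 Z z
       + (F2 g x w * kDD g x z + kDD g x w * kDD g w z + kDA g x w * kAD g w z) * de z * prodF2 z Z"
      by (simp only: t3 t4)
    also have "\<dots> = F2 g x w * (kDA g x z * al z * prodF1 Z z + kDD g x z * de z * prodF2 z Z) +
      kDD g x w * (kDA g w z * al z * prodF1 Z z + kDD g w z * de z * prodF2 z Z) +
      kDA g x w * (kAA g w z * al z * prodF1 Z z + kAD g w z * de z * prodF2 z Z)" by (simp add: algebra_simps)
    finally show "kDA g x z * al z * (F1 g w z * prodF1 Z z) + kDD g x z * de z * (F2 g z w * prodF2 z Z) =
      F2 g x w * (kDA g x z * al z * prodF1 Z z + kDD g x z * de z * prodF2 z Z) +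
      kDD g x w * (kDA g w z * al z * prodF1 Z z + kDD g w z * de z * prodF2 z Z) +
      kDA g x w * (kAA g w z * al z * prodF1 Z z + kAD g w z * de z * prodF2 z Z)" .
  qed
qed

lemma sum_linear_combination3: "(a::complex) * (\<Sum>k<n. p k * X k) + b * (\<Sum>k<n. q k * X k) + c * (\<Sum>k<n. r k * X k)
   = (\<Sum>k<n. (a * p k + b * q k + c * r k) * X k)"
  by (simp add: sum_distrib_left sum.distrib algebra_simps)

definition A_action :: "complex \<Rightarrow> complex list \<Rightarrow> bool" where
  "A_action x Y \<longleftrightarrow> A x (bethe Y) = (\<lambda>s. al x * prodF1 Y x * bethe Y s
     + (\<Sum>k<length Y. coefA x (Y ! k) (del_nth Y k) * B x (bethe (del_nth Y k)) s))"

definition Dt_action :: "complex \<Rightarrow> complex list \<Rightarrow> bool" where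
  "Dt_action x Y \<longleftrightarrow> Dt x (bethe Y) = (\<lambda>s. de x * prodF2 x Y * bethe Y s
     + (\<Sum>k<length Y. coefD x (Y ! k) (del_nth Y k) * B x (bethe (del_nth Y k)) s))"

lemma A_action_Cons:
  assumes xw: "generic_pair x w" and gen: "\<forall>z\<in>set Z. generic_pair x z \<and> generic_pair w z"
    and Ax: "A_action x Z" and Aw: "A_action w Z" and Dw: "Dt_action w Z"
  shows "A_action x (w # Z)"
proof -
  define W where "W k = B x (B w (bethe (del_nth Z k)))" for k
  have Bw_Ax: "B w (A x (bethe Z)) s = al x * prodF1 Z x * B w (bethe Z) s
      + (\<Sum>k<length Z. coefA x (Z ! k) (del_nth Z k) * W k s)" for s
    unfolding Ax[unfolded A_action_def] linear_op_comb[OF linB] W_def B_commute[of w x] ..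
  have Bx_Aw: "B x (A w (bethe Z)) s = al w * prodF1 Z w * B x (bethe Z) s
      + (\<Sum>k<length Z. coefA w (Z ! k) (del_nth Z k) * W k s)" for s
    unfolding Aw[unfolded A_action_def] linear_op_comb[OF linB] W_def ..
  have Bx_Dw: "B x (Dt w (bethe Z)) s = de w * prodF2 w Z * B x (bethe Z) s
      + (\<Sum>k<length Z. coefD w (Z ! k) (del_nth Z k) * W k s)" for s
    unfolding Dw[unfolded Dt_action_def] linear_op_comb[OF linB] W_def ..
  have rec: "coefA x (Z ! k) (w # del_nth Z k) = F1 g w x * coefA x (Z ! k) (del_nth Z k)
      + kAA g x w * coefA w (Z ! k) (del_nth Z k) + kAD g x w * coefD w (Z ! k) (del_nth Z k)"
    if "k < length Z" for k
    using gen nth_mem[OF that] by (simp add: coefA_Cons xw)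
  have expand: "A x (bethe (w # Z)) s = al x * prodF1 (w # Z) x * bethe (w # Z) s + coefA x w Z * B x (bethe Z) s
      + (\<Sum>k<length Z. coefA x (Z ! k) (w # del_nth Z k) * W k s)" for s
  proof -
    have "A x (bethe (w # Z)) s
        = F1 g w x * B w (A x (bethe Z)) s + kAA g x w * B x (A w (bethe Z)) s + kAD g x w * B x (Dt w (bethe Z)) s"
      unfolding bethe_Cons by (rule A_B_exchange_solved[OF xw])
    also have "\<dots> = al x * (F1 g w x * prodF1 Z x) * B w (bethe Z) s
        + (kAA g x w * al w * prodF1 Z w + kAD g x w * de w * prodF2 w Z) * B x (bethe Z) s
        + (F1 g w x * (\<Sum>k<length Z. coefA x (Z ! k) (del_nth Z k) * W k s)
          + kAA g x w * (\<Sum>k<length Z. coefA w (Z ! k) (del_nth Z k) * W k s)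
          + kAD g x w * (\<Sum>k<length Z. coefD w (Z ! k) (del_nth Z k) * W k s))"
      unfolding Bw_Ax Bx_Aw Bx_Dw by (simp add: algebra_simps)
    also have "\<dots> = al x * prodF1 (w # Z) x * bethe (w # Z) s + coefA x w Z * B x (bethe Z) s
        + (\<Sum>k<length Z. coefA x (Z ! k) (w # del_nth Z k) * W k s)"
      unfolding sum_linear_combination3 coefA_def[of x w Z, symmetric] by (simp add: rec)
    finally show ?thesis .
  qed
  moreover have "(\<Sum>k<length (w # Z). coefA x ((w # Z) ! k) (del_nth (w # Z) k) * B x (bethe (del_nth (w # Z) k)) s)
      = coefA x w Z * B x (bethe Z) s + (\<Sum>k<length Z. coefA x (Z ! k) (w # del_nth Z k) * W k s)" for s
    using sum_del_nth_Cons[of "\<lambda>y Y. coefA x y Y * B x (bethe Y) s"] by (simp add: W_def)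
  ultimately show ?thesis
    unfolding A_action_def by (simp add: fun_eq_iff)
qed

lemma Dt_action_Cons:
  assumes xw: "generic_pair x w" and gen: "\<forall>z\<in>set Z. generic_pair x z \<and> generic_pair w z"
    and Dx: "Dt_action x Z" and Aw: "A_action w Z" and Dw: "Dt_action w Z"
  shows "Dt_action x (w # Z)"
proof -
  define W where "W k = B x (B w (bethe (del_nth Z k)))" for k
  have Bw_Dx: "B w (Dt x (bethe Z)) s = de x * prodF2 x Z * B w (bethe Z) s
      + (\<Sum>k<length Z. coefD x (Z ! k) (del_nth Z k) * W k s)" for s
    unfolding Dx[unfolded Dt_action_def] linear_op_comb[OF linB] W_def B_commute[of w x] ..
  have Bx_Aw: "B x (A w (bethe Z)) s = al w * prodF1 Z w * B x (bethe Z) s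
      + (\<Sum>k<length Z. coefA w (Z ! k) (del_nth Z k) * W k s)" for s
    unfolding Aw[unfolded A_action_def] linear_op_comb[OF linB] W_def ..
  have Bx_Dw: "B x (Dt w (bethe Z)) s = de w * prodF2 w Z * B x (bethe Z) s
      + (\<Sum>k<length Z. coefD w (Z ! k) (del_nth Z k) * W k s)" for s
    unfolding Dw[unfolded Dt_action_def] linear_op_comb[OF linB] W_def ..
  have rec: "coefD x (Z ! k) (w # del_nth Z k) = F2 g x w * coefD x (Z ! k) (del_nth Z k)
      + kDD g x w * coefD w (Z ! k) (del_nth Z k) + kDA g x w * coefA w (Z ! k) (del_nth Z k)"
    if "k < length Z" for k
    using gen nth_mem[OF that] by (simp add: coefD_Cons xw)
  have expand: "Dt x (bethe (w # Z)) s = de x * prodF2 x (w # Z) * bethe (w # Z) s + coefD x w Z * B x (bethe Z) s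
      + (\<Sum>k<length Z. coefD x (Z ! k) (w # del_nth Z k) * W k s)" for s
  proof -
    have "Dt x (bethe (w # Z)) s
        = F2 g x w * B w (Dt x (bethe Z)) s + kDD g x w * B x (Dt w (bethe Z)) s + kDA g x w * B x (A w (bethe Z)) s"
      unfolding bethe_Cons by (rule Dt_B_exchange_solved[OF xw])
    also have "\<dots> = de x * (F2 g x w * prodF2 x Z) * B w (bethe Z) s
        + (kDA g x w * al w * prodF1 Z w + kDD g x w * de w * prodF2 w Z) * B x (bethe Z) s
        + (F2 g x w * (\<Sum>k<length Z. coefD x (Z ! k) (del_nth Z k) * W k s)
          + kDD g x w * (\<Sum>k<length Z. coefD w (Z ! k) (del_nth Z k) * W k s)
          + kDA g x w * (\<Sum>k<length Z. coefA w (Z ! k) (del_nth Z k) * W k s))"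
      unfolding Bw_Dx Bx_Aw Bx_Dw by (simp add: algebra_simps)
    also have "\<dots> = de x * prodF2 x (w # Z) * bethe (w # Z) s + coefD x w Z * B x (bethe Z) s
        + (\<Sum>k<length Z. coefD x (Z ! k) (w # del_nth Z k) * W k s)"
      unfolding sum_linear_combination3 coefD_def[of x w Z, symmetric] by (simp add: rec)
    finally show ?thesis .
  qed
  moreover have "(\<Sum>k<length (w # Z). coefD x ((w # Z) ! k) (del_nth (w # Z) k) * B x (bethe (del_nth (w # Z) k)) s)
      = coefD x w Z * B x (bethe Z) s + (\<Sum>k<length Z. coefD x (Z ! k) (w # del_nth Z k) * W k s)" for s
    using sum_del_nth_Cons[of "\<lambda>y Y. coefD x y Y * B x (bethe Y) s"] by (simp add: W_def)
  ultimately show ?thesis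
    unfolding Dt_action_def by (simp add: fun_eq_iff)
qed

lemma bethe_action:
  assumes "sorted_wrt generic_pair Y" and "\<forall>y\<in>set Y. generic_pair x y"
  shows "A_action x Y \<and> Dt_action x Y"
  using assms
proof (induction Y arbitrary: x)
  case Nil
  show ?case by (simp add: A_action_def Dt_action_def bethe_def prodF1_def prodF2_def vA vD)
next
  case (Cons w Z)
  then have "\<forall>z\<in>set Z. generic_pair x z \<and> generic_pair w z" "A_action w Z \<and> Dt_action w Z"
    "A_action x Z \<and> Dt_action x Z"
    by auto
  with Cons.prems show ?case
    by (simp add: A_action_Cons Dt_action_Cons)
qed
end

context site_chain begin

lemma bethe_ansatz_instance:
  assumes sj: "set js = {1..L}"
  shows "bethe_ansatz \<gamma> (E False False) (E False True) Dt (\<lambda>x. vac_A_eigen \<gamma> h \<mu> x js) (\<lambda>x. vac_Dt_eigen \<gamma> h \<mu> x js) (vac L)"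
proof -
  have vjs: "\<forall>k\<in>set js. supported_e1 k (vac L)" using sj supported_e1_vac by blast
  have f0: "(\<lambda>(b, s'). if b = False then vac L s' else 0) = (\<lambda>(b, s'). if b then 0 else vac L s')"
    by (auto simp: fun_eq_iff)
  have f1: "(\<lambda>(b, s'). if b = True then vac L s' else 0) = (\<lambda>(b, s'). if b then vac L s' else 0)"
    by (auto simp: fun_eq_iff)
  have vA: "E False False x (vac L) = (\<lambda>s. vac_A_eigen \<gamma> h \<mu> x js * vac L s)" for x
    unfolding entry_def f0 double_row_vacuum_A[OF dj pos vjs] by (simp add: fun_eq_iff)
  have vD: "E True True x (vac L) s = vac_D_eigen \<gamma> h \<mu> x js * vac L s" for x s
    unfolding entry_def f1 double_row_vacuum_D[OF dj pos vjs] ..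
  show ?thesis
  proof unfold_locales
    show "E False True x (E False True y \<phi>) = E False True y (E False True x \<phi>)" for x y \<phi>
      using B_commute by (simp add: fun_eq_iff)
    show "Dt x (vac L) = (\<lambda>s. vac_Dt_eigen \<gamma> h \<mu> x js * vac L s)" for x
      unfolding Dt_def vac_Dt_eigen_def vD vA by (simp add: fun_eq_iff algebra_simps)
  qed (rule linear_entry linear_Dt A_B_exchange Dt_B_exchange vA)+
qed

end

definition agree_len :: "nat \<Rightarrow> fstate \<Rightarrow> fstate \<Rightarrow> bool" where
  "agree_len L f g \<longleftrightarrow> (\<forall>a s. length s = L \<longrightarrow> f (a, s) = g (a, s))"

lemma Rop_agree_Rsite: "agree_len L f g \<Longrightarrow> 1 \<le> j \<Longrightarrow> j \<le> L \<Longrightarrow> agree_len L (Rop \<gamma> x j f) (Rsite \<gamma> x j g)"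
  unfolding agree_len_def Rop_def Rsite_def by (auto intro!: sum.cong)

lemma Kop_agree: "agree_len L f g \<Longrightarrow> agree_len L (Kop h x f) (Kop h x g)"
  unfolding agree_len_def Kop_def by auto

definition mono_sites :: "complex \<Rightarrow> complex \<Rightarrow> (nat \<Rightarrow> complex) \<Rightarrow> complex \<Rightarrow> nat list \<Rightarrow> fstate \<Rightarrow> fstate" where
  "mono_sites \<gamma> h \<mu> x js = fold (\<lambda>j f. Rop \<gamma> (x - \<mu> j) j \<circ> f) js id \<circ> Kop h x \<circ> fold (\<lambda>j f. f \<circ> Rop \<gamma> (x + \<mu> j) j) js id"

lemma mono_sites_Nil: "mono_sites \<gamma> h \<mu> x [] = Kop h x" by (simp add: mono_sites_def)
lemma mono_sites_snoc: "mono_sites \<gamma> h \<mu> x (js @ [j]) = Rop \<gamma> (x - \<mu> j) j \<circ> mono_sites \<gamma> h \<mu> x js \<circ> Rop \<gamma> (x + \<mu> j) j"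
  by (simp add: mono_sites_def comp_assoc)

lemma mono_sites_double_row: "set js \<subseteq> {1..L} \<Longrightarrow> agree_len L f g \<Longrightarrow> agree_len L (mono_sites \<gamma> h \<mu> x js f) (double_row \<gamma> h \<mu> x (rev js) g)"
proof (induction js arbitrary: f g rule: rev_induct)
  case Nil
  then show ?case by (simp add: mono_sites_Nil Kop_agree)
next
  case (snoc j js)
  have j: "1 \<le> j" "j \<le> L" and sub: "set js \<subseteq> {1..L}" using snoc.prems by auto
  have "agree_len L (Rop \<gamma> (x + \<mu> j) j f) (Rsite \<gamma> (x + \<mu> j) j g)" by (rule Rop_agree_Rsite[OF snoc.prems(2) j])
  then have "agree_len L (mono_sites \<gamma> h \<mu> x js (Rop \<gamma> (x + \<mu> j) j f)) (double_row \<gamma> h \<mu> x (rev js) (Rsite \<gamma> (x + \<mu> j) j g))"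
    by (rule snoc.IH[OF sub])
  then have "agree_len L (Rop \<gamma> (x - \<mu> j) j (mono_sites \<gamma> h \<mu> x js (Rop \<gamma> (x + \<mu> j) j f)))
     (Rsite \<gamma> (x - \<mu> j) j (double_row \<gamma> h \<mu> x (rev js) (Rsite \<gamma> (x + \<mu> j) j g)))"
    by (rule Rop_agree_Rsite[OF _ j])
  then show ?case by (simp add: mono_sites_snoc)
qed

(* Mono has R_{0L} outermost, while double_row puts the head of the site list outermost. *)
definition sites :: "nat \<Rightarrow> nat list" where
  "sites L = rev [1..<L+1]"

lemma sites_props: "distinct (sites L)" "\<forall>k\<in>set (sites L). k \<ge> 1" "set (sites L) = {1..L}"
  by (auto simp: sites_def)

lemma site_chain_sites: "site_chain (sites L)"
  unfolding site_chain_def using sites_props by blast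

lemma Mono_eq_double_row: "length s = L \<Longrightarrow> Mono \<gamma> h L \<mu> x f (a, s) = double_row \<gamma> h \<mu> x (sites L) f (a, s)"
proof -
  assume l: "length s = L"
  have "Mono \<gamma> h L \<mu> x = mono_sites \<gamma> h \<mu> x [1..<L+1]" by (simp add: Mono_def mono_sites_def)
  moreover have "agree_len L (mono_sites \<gamma> h \<mu> x [1..<L+1] f) (double_row \<gamma> h \<mu> x (rev [1..<L+1]) f)"
    by (rule mono_sites_double_row) (auto simp: agree_len_def)
  ultimately show ?thesis using l unfolding agree_len_def sites_def by simp
qed

definition qagree_len :: "nat \<Rightarrow> qstate \<Rightarrow> qstate \<Rightarrow> bool" where
  "qagree_len L \<phi> \<psi> \<longleftrightarrow> (\<forall>s. length s = L \<longrightarrow> \<phi> s = \<psi> s)"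

lemma double_row_agree: "agree_len L f g \<Longrightarrow> agree_len L (double_row \<gamma> h \<mu> x js f) (double_row \<gamma> h \<mu> x js g)"
proof (induction js arbitrary: f g)
  case Nil
  then show ?case by (simp add: Kop_agree)
next
  case (Cons j js)
  have r: "agree_len L (Rsite \<gamma> y j f') (Rsite \<gamma> y j g')" if "agree_len L f' g'" for y f' g'
    using that unfolding agree_len_def Rsite_def by (auto intro!: sum.cong)
  show ?case using Cons by (simp add: r)
qed

lemma Ment_agree_entry: "qagree_len L \<phi> \<psi> \<Longrightarrow> qagree_len L (Ment \<gamma> h L \<mu> i j x \<phi>) (entry \<gamma> h \<mu> (sites L) i j x \<psi>)"
proof -
  assume q: "qagree_len L \<phi> \<psi>"
  have e: "agree_len L (\<lambda>(a, s'). if a = j then \<phi> s' else 0) (\<lambda>(a, s'). if a = j then \<psi> s' else 0)"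
    using q unfolding qagree_len_def agree_len_def by auto
  show ?thesis
    using double_row_agree[OF e, of \<gamma> h \<mu> x "sites L"] unfolding qagree_len_def Ment_def entry_def agree_len_def
    by (simp add: Mono_eq_double_row)
qed

lemma Sn_eq_entries: "Sn \<gamma> h L \<mu> xs ys = fold (entry \<gamma> h \<mu> (sites L) True False) xs (foldr (entry \<gamma> h \<mu> (sites L) False True) ys (vac L)) (replicate L False)"
proof -
  have b: "qagree_len L (foldr (Bop \<gamma> h L \<mu>) ys (vac L)) (foldr (entry \<gamma> h \<mu> (sites L) False True) ys (vac L))"
    by (induction ys) (auto simp: qagree_len_def Bop_def intro: Ment_agree_entry[unfolded qagree_len_def, rule_format])
  have c: "qagree_len L \<Phi> \<Psi> \<Longrightarrow> qagree_len L (fold (Cop \<gamma> h L \<mu>) xs \<Phi>) (fold (entry \<gamma> h \<mu> (sites L) True False) xs \<Psi>)" for \<Phi> \<Psi>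
  proof (induction xs arbitrary: \<Phi> \<Psi>)
    case Nil
    then show ?case by simp
  next
    case (Cons x xs)
    have "qagree_len L (Cop \<gamma> h L \<mu> x \<Phi>) (entry \<gamma> h \<mu> (sites L) True False x \<Psi>)"
      unfolding Cop_def by (rule Ment_agree_entry[OF Cons.prems])
    then show ?case using Cons.IH by simp
  qed
  show ?thesis using c[OF b] unfolding Sn_def qagree_len_def by simp
qed

section \<open>Transposition\<close>

definition states_len :: "nat \<Rightarrow> bool list set" where "states_len L = {s. length s = L}"

lemma finite_states_len: "finite (states_len L)"
proof -
  have "finite {xs. set xs \<subseteq> (UNIV :: bool set) \<and> length xs = L}"
    by (rule finite_lists_length_eq) simp
  then show ?thesis unfolding states_len_def by simp
qed

lemma sum_update_swap:
  fixes H :: "bool list \<Rightarrow> bool \<Rightarrow> 'a::comm_monoid_add"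
  assumes "i < L"
  shows "(\<Sum>s\<in>states_len L. \<Sum>t\<in>UNIV. H s t) = (\<Sum>s\<in>states_len L. \<Sum>t\<in>UNIV. H (s[i := t]) (s ! i))"
proof -
  have "(\<Sum>s\<in>states_len L. \<Sum>t\<in>UNIV. H s t) = (\<Sum>(s, t)\<in>states_len L \<times> (UNIV :: bool set). H s t)"
    by (rule sum.cartesian_product)
  also have "\<dots> = (\<Sum>(s, t)\<in>states_len L \<times> (UNIV :: bool set). H (s[i := t]) (s ! i))"
    by (rule sum.reindex_bij_witness[where i = "\<lambda>(s, t). (s[i := t], s ! i)" and j = "\<lambda>(s, t). (s[i := t], s ! i)"])
       (use assms in \<open>auto simp: states_len_def\<close>)
  also have "\<dots> = (\<Sum>s\<in>states_len L. \<Sum>t\<in>UNIV. H (s[i := t]) (s ! i))"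
    by (rule sum.cartesian_product[symmetric])
  finally show ?thesis .
qed

definition pairing_full :: "nat \<Rightarrow> fstate \<Rightarrow> fstate \<Rightarrow> complex" where
  "pairing_full L f g = (\<Sum>a\<in>UNIV. \<Sum>s\<in>states_len L. f (a, s) * g (a, s))"

lemma Rsite_in: "j - 1 < length s \<Longrightarrow> Rsite \<gamma> x j f (a, s) = (\<Sum>a'\<in>UNIV. \<Sum>t\<in>UNIV. Rent \<gamma> x (a, s ! (j - 1)) (a', t) * f (a', s[j - 1 := t]))"
  by (simp add: Rsite_def)

lemma Rsite_transpose:
  assumes "1 \<le> j" "j \<le> L"
  shows "pairing_full L (Rsite \<gamma> x j f) g = pairing_full L f (Rsite \<gamma> x j g)"
proof -
  have i: "j - 1 < L" using assms by simp
  define Q where "Q s t = (\<Sum>a\<in>UNIV. \<Sum>a'\<in>UNIV. Rent \<gamma> x (a, s ! (j - 1)) (a', t) * f (a', s[j - 1 := t]) * g (a, s))" for s t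
  have pair_Rsite_left: "pairing_full L (Rsite \<gamma> x j f) g = (\<Sum>s\<in>states_len L. \<Sum>t\<in>UNIV. Q s t)"
    unfolding pairing_full_def sum.swap[of _ "states_len L" UNIV]
    by (rule sum.cong[OF refl]) (use i in \<open>simp add: states_len_def Rsite_in Q_def sum_UNIV_bool algebra_simps\<close>)
  have pair_swap: "(\<Sum>s\<in>states_len L. \<Sum>t\<in>UNIV. Q s t) = (\<Sum>s\<in>states_len L. \<Sum>t\<in>UNIV. Q (s[j - 1 := t]) (s ! (j - 1)))"
    by (rule sum_update_swap[OF i])
  have pair_Rsite_right: "pairing_full L f (Rsite \<gamma> x j g) = (\<Sum>s\<in>states_len L. \<Sum>t\<in>UNIV. Q (s[j - 1 := t]) (s ! (j - 1)))"
    unfolding pairing_full_def sum.swap[of _ "states_len L" UNIV]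
  proof (rule sum.cong[OF refl])
    fix s assume "s \<in> states_len L"
    with i show "(\<Sum>a\<in>UNIV. f (a, s) * Rsite \<gamma> x j g (a, s)) = (\<Sum>t\<in>UNIV. Q (s[j - 1 := t]) (s ! (j - 1)))"
      by (cases "s ! (j - 1)")
        (simp_all add: states_len_def Rsite_in Q_def sum_UNIV_bool Rent_def algebra_simps list_update_same_nth)
  qed
  show ?thesis using pair_Rsite_left pair_swap pair_Rsite_right by simp
qed

lemma Kop_transpose: "pairing_full L (Kop h x f) g = pairing_full L f (Kop h x g)"
  unfolding pairing_full_def Kop_def by (simp add: algebra_simps)

(* Every R-matrix is symmetric, so transposition reverses the order of the factors, and reversing
   the double row is the same as negating the inhomogeneities. *)
lemma double_row_transpose:
  assumes "set js \<subseteq> {1..L}"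
  shows "pairing_full L (double_row \<gamma> h \<mu> x js f) g = pairing_full L f (double_row \<gamma> h (\<lambda>k. - \<mu> k) x js g)"
  using assms
proof (induction js arbitrary: f g)
  case Nil
  then show ?case by (simp add: Kop_transpose)
next
  case (Cons j js)
  have j: "1 \<le> j" "j \<le> L" and sub: "set js \<subseteq> {1..L}" using Cons.prems by auto
  have e1: "x - - \<mu> j = x + \<mu> j" "x + - \<mu> j = x - \<mu> j" by simp_all
  have "pairing_full L (double_row \<gamma> h \<mu> x (j # js) f) g
      = pairing_full L (Rsite \<gamma> (x - \<mu> j) j (double_row \<gamma> h \<mu> x js (Rsite \<gamma> (x + \<mu> j) j f))) g" by simp
  also have "\<dots> = pairing_full L (double_row \<gamma> h \<mu> x js (Rsite \<gamma> (x + \<mu> j) j f)) (Rsite \<gamma> (x - \<mu> j) j g)"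
    by (rule Rsite_transpose[OF j])
  also have "\<dots> = pairing_full L (Rsite \<gamma> (x + \<mu> j) j f) (double_row \<gamma> h (\<lambda>k. - \<mu> k) x js (Rsite \<gamma> (x - \<mu> j) j g))"
    by (rule Cons.IH[OF sub])
  also have "\<dots> = pairing_full L f (Rsite \<gamma> (x + \<mu> j) j (double_row \<gamma> h (\<lambda>k. - \<mu> k) x js (Rsite \<gamma> (x - \<mu> j) j g)))"
    by (rule Rsite_transpose[OF j])
  also have "\<dots> = pairing_full L f (double_row \<gamma> h (\<lambda>k. - \<mu> k) x (j # js) g)"
    by (simp only: double_row.simps comp_apply e1)
  finally show ?case .
qed

definition pairing :: "nat \<Rightarrow> qstate \<Rightarrow> qstate \<Rightarrow> complex" where
  "pairing L \<phi> \<psi> = (\<Sum>s\<in>states_len L. \<phi> s * \<psi> s)"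

lemma pairing_full_delta_right: "pairing_full L f (\<lambda>(a, s). if a = i then \<psi> s else 0) = (\<Sum>s\<in>states_len L. f (i, s) * \<psi> s)"
  unfolding pairing_full_def by (cases i) (simp_all add: sum_UNIV_bool)
lemma pairing_full_delta_left: "pairing_full L (\<lambda>(a, s). if a = i then \<psi> s else 0) f = (\<Sum>s\<in>states_len L. \<psi> s * f (i, s))"
  unfolding pairing_full_def by (cases i) (simp_all add: sum_UNIV_bool)

lemma entry_transpose:
  assumes "set js \<subseteq> {1..L}"
  shows "pairing L (entry \<gamma> h \<mu> js i j x \<phi>) \<psi> = pairing L \<phi> (entry \<gamma> h (\<lambda>k. - \<mu> k) js j i x \<psi>)"
proof -
  have "pairing L (entry \<gamma> h \<mu> js i j x \<phi>) \<psi> = pairing_full L (double_row \<gamma> h \<mu> x js (\<lambda>(a, s'). if a = j then \<phi> s' else 0)) (\<lambda>(a, s). if a = i then \<psi> s else 0)"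
    unfolding pairing_def entry_def pairing_full_delta_right ..
  also have "\<dots> = pairing_full L (\<lambda>(a, s'). if a = j then \<phi> s' else 0) (double_row \<gamma> h (\<lambda>k. - \<mu> k) x js (\<lambda>(a, s). if a = i then \<psi> s else 0))"
    by (rule double_row_transpose[OF assms])
  also have "\<dots> = pairing L \<phi> (entry \<gamma> h (\<lambda>k. - \<mu> k) js j i x \<psi>)"
    unfolding pairing_def entry_def pairing_full_delta_left ..
  finally show ?thesis .
qed

lemma pairing_vac: "pairing L (vac L) \<psi> = \<psi> (replicate L False)"
proof -
  have "pairing L (vac L) \<psi> = (\<Sum>s\<in>states_len L. if s = replicate L False then \<psi> s else 0)"
    unfolding pairing_def vac_def by (intro sum.cong) auto
  also have "\<dots> = \<psi> (replicate L False)"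
    using finite_states_len by (simp add: states_len_def)
  finally show ?thesis .
qed

lemma pairing_fold:
  assumes "set js \<subseteq> {1..L}"
  shows "pairing L \<phi> (fold (entry \<gamma> h \<mu> js True False) xs \<Phi>) = pairing L (foldr (entry \<gamma> h (\<lambda>k. - \<mu> k) js False True) xs \<phi>) \<Phi>"
proof (induction xs arbitrary: \<phi> \<Phi>)
  case Nil
  then show ?case by simp
next
  case (Cons x xs)
  have e: "(\<lambda>k. - (- \<mu> k)) = \<mu>" by simp
  have "pairing L \<phi> (fold (entry \<gamma> h \<mu> js True False) (x # xs) \<Phi>) = pairing L (foldr (entry \<gamma> h (\<lambda>k. - \<mu> k) js False True) xs \<phi>) (entry \<gamma> h \<mu> js True False x \<Phi>)"
    using Cons.IH by simp
  also have "\<dots> = pairing L (entry \<gamma> h (\<lambda>k. - \<mu> k) js False True x (foldr (entry \<gamma> h (\<lambda>k. - \<mu> k) js False True) xs \<phi>)) \<Phi>"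
    using entry_transpose[OF assms, of \<gamma> h "\<lambda>k. - \<mu> k" False True x "foldr (entry \<gamma> h (\<lambda>k. - \<mu> k) js False True) xs \<phi>" \<Phi>]
    unfolding e by simp
  finally show ?case by simp
qed

lemma pairing_comb_right: "pairing L \<phi> (\<lambda>s. c * u s + (\<Sum>k<n. q k * V k s)) = c * pairing L \<phi> u + (\<Sum>k<n. q k * pairing L \<phi> (V k))"
  unfolding pairing_def by (simp add: sum_distrib_left sum.distrib algebra_simps sum.swap[of _ "states_len L"])
lemma pairing_comb_left: "pairing L (\<lambda>s. c * u s + (\<Sum>k<n. q k * V k s)) \<psi> = c * pairing L u \<psi> + (\<Sum>k<n. q k * pairing L (V k) \<psi>)"
  unfolding pairing_def by (simp add: sum_distrib_left sum.distrib algebra_simps sum.swap[of _ "states_len L"])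

section \<open>Action of A on off-shell Bethe vectors\<close>

lemma vac_A_eigen_prod: "vac_A_eigen \<gamma> h \<mu> x js = sinh (h + x) * prod_list (map (\<lambda>j. wa \<gamma> (x - \<mu> j) * wa \<gamma> (x + \<mu> j)) js)"
  by (induction js) (simp_all add: algebra_simps)

lemma vac_Dt_eigen_prod: "vac_Dt_eigen \<gamma> h \<mu> x js = - wb (2 * x) * wa \<gamma> (x - h) * prod_list (map (\<lambda>j. wb (x - \<mu> j) * wb (x + \<mu> j)) js)"
proof (induction js)
  case Nil
  show ?case unfolding vac_Dt_eigen_def vac_D_eigen.simps vac_A_eigen.simps
    unfolding wa_def wb_def wc_def mult_2 sinh_field_def
    by (simp only: exp_add exp_diff exp_minus) (simp add: field_simps, (simp add: algebra_simps)?)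
next
  case (Cons j js)
  have id1: "wa \<gamma> (x - \<mu> j) * wa \<gamma> (x + \<mu> j) - wb (x - \<mu> j) * wb (x + \<mu> j) = wc \<gamma> * wa \<gamma> (2 * x)"
    by (rule wa_wa_minus_wb_wb)
  have "vac_Dt_eigen \<gamma> h \<mu> x (j # js) = wb (x - \<mu> j) * wb (x + \<mu> j) * vac_Dt_eigen \<gamma> h \<mu> x js
      + wc \<gamma> * vac_A_eigen \<gamma> h \<mu> x js * (wc \<gamma> * wa \<gamma> (2 * x) - (wa \<gamma> (x - \<mu> j) * wa \<gamma> (x + \<mu> j) - wb (x - \<mu> j) * wb (x + \<mu> j)))"
    unfolding vac_Dt_eigen_def by (simp add: algebra_simps)
  also have "\<dots> = wb (x - \<mu> j) * wb (x + \<mu> j) * vac_Dt_eigen \<gamma> h \<mu> x js" unfolding id1 by simp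
  finally show ?case unfolding Cons by (simp add: algebra_simps)
qed

lemma prod_list_sites: "prod_list (map f (sites L)) = (\<Prod>j = 1..L. f j)"
proof -
  have "prod_list (map f (sites L)) = prod f (set (sites L))"
    by (rule prod.distinct_set_conv_list[symmetric]) (simp add: sites_props)
  then show ?thesis using sites_props(3) by simp
qed

lemma vac_A_eigen_LamA: "vac_A_eigen \<gamma> h \<mu> x (sites L) = LamA \<gamma> h L \<mu> x"
  unfolding vac_A_eigen_prod prod_list_sites LamA_def wb_def ..

lemma vac_Dt_eigen_LamDt: "wa \<gamma> (2 * x) \<noteq> 0 \<Longrightarrow> vac_Dt_eigen \<gamma> h \<mu> x (sites L) = wa \<gamma> (2 * x) * LamDt \<gamma> h L \<mu> x"
  unfolding vac_Dt_eigen_prod prod_list_sites LamDt_def by (simp add: field_simps)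

lemma delvec_del_nth: "delvec l0 ws k = l0 # del_nth ws k"
  by (simp add: delvec_def del_nth_def)

definition bethe_vector :: "complex \<Rightarrow> complex \<Rightarrow> nat \<Rightarrow> (nat \<Rightarrow> complex) \<Rightarrow> complex list \<Rightarrow> qstate" where
  "bethe_vector \<gamma> h L \<mu> ws = foldr (entry \<gamma> h \<mu> (sites L) False True) ws (vac L)"

lemma Sn_eq_pairing:
  "Sn \<gamma> h L \<mu> X Y = pairing L (bethe_vector \<gamma> h L (\<lambda>k. - \<mu> k) X) (bethe_vector \<gamma> h L \<mu> Y)"
proof -
  have sub: "set (sites L) \<subseteq> {1..L}" using sites_props by simp
  show ?thesis
    unfolding bethe_vector_def Sn_eq_entries pairing_vac[symmetric] pairing_fold[OF sub] ..
qed

lemma LamA_uminus_inhom: "LamA \<gamma> h L (\<lambda>k. - \<mu> k) = LamA \<gamma> h L \<mu>"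
  by (simp add: LamA_def fun_eq_iff mult.commute)

lemma LamDt_uminus_inhom: "LamDt \<gamma> h L (\<lambda>k. - \<mu> k) = LamDt \<gamma> h L \<mu>"
  by (simp add: LamDt_def fun_eq_iff mult.commute)

lemma Nlam_uminus_inhom: "Nlam \<gamma> h L (\<lambda>k. - \<mu> k) = Nlam \<gamma> h L \<mu>"
  by (simp add: Nlam_def LamA_uminus_inhom LamDt_uminus_inhom fun_eq_iff)

lemma unwanted_coefficient_eq_Nlam:
  assumes k: "k < length ws"
    and nz: "wa \<gamma> (2 * (ws ! k)) \<noteq> 0" "wb (ws ! k - l0) \<noteq> 0" "wa \<gamma> (ws ! k + l0) \<noteq> 0"
  shows "kAA \<gamma> l0 (ws ! k) * LamA \<gamma> h L \<mu> (ws ! k) * prod_list (map (\<lambda>z. F1 \<gamma> z (ws ! k)) (del_nth ws k))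
       + kAD \<gamma> l0 (ws ! k) * (wa \<gamma> (2 * (ws ! k)) * LamDt \<gamma> h L \<mu> (ws ! k))
           * prod_list (map (\<lambda>z. F2 \<gamma> (ws ! k) z) (del_nth ws k))
       = - Nlam \<gamma> h L \<mu> l0 ws k"
proof -
  have "wb (l0 - ws ! k) = - wb (ws ! k - l0)" "wa \<gamma> (l0 + ws ! k) = wa \<gamma> (ws ! k + l0)"
    by (rule wb_minus_commute) (simp add: add.commute)
  then show ?thesis
    unfolding prod_list_del_nth[OF k] kAA_def kAD_def Nlam_def Let_def
    using nz by (simp add: field_simps)
qed

lemma entry_A_bethe_vector:
  assumes gen: "\<forall>z\<in>set ws. wb (z - l0) \<noteq> 0 \<and> wa \<gamma> (z + l0) \<noteq> 0 \<and> wa \<gamma> (2 * z) \<noteq> 0"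
    and pairs: "\<forall>i<length ws. \<forall>j<length ws. i \<noteq> j \<longrightarrow> wb (ws ! i - ws ! j) \<noteq> 0 \<and> wa \<gamma> (ws ! i + ws ! j) \<noteq> 0"
  shows "entry \<gamma> h \<mu> (sites L) False False l0 (bethe_vector \<gamma> h L \<mu> ws)
    = (\<lambda>s. LamA \<gamma> h L \<mu> l0 * (\<Prod>k<length ws. F1 \<gamma> (ws ! k) l0) * bethe_vector \<gamma> h L \<mu> ws s
         + (\<Sum>k<length ws. - Nlam \<gamma> h L \<mu> l0 ws k * bethe_vector \<gamma> h L \<mu> (delvec l0 ws k) s))"
proof -
  interpret C: site_chain \<gamma> h \<mu> "sites L" by (rule site_chain_sites)
  interpret R: bethe_ansatz \<gamma> "entry \<gamma> h \<mu> (sites L) False False" "entry \<gamma> h \<mu> (sites L) False True" C.Dt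
      "LamA \<gamma> h L \<mu>" "\<lambda>x. vac_Dt_eigen \<gamma> h \<mu> x (sites L)" "vac L"
    using C.bethe_ansatz_instance[OF sites_props(3)] unfolding vac_A_eigen_LamA .
  have bethe: "R.bethe = bethe_vector \<gamma> h L \<mu>"
    by (simp add: fun_eq_iff R.bethe_def bethe_vector_def)
  have "sorted_wrt R.generic_pair ws"
    unfolding sorted_wrt_iff_nth_less R.generic_pair_def using pairs gen by auto
  moreover have "\<forall>y\<in>set ws. R.generic_pair l0 y"
    using gen unfolding R.generic_pair_def by (auto simp: wb_minus_commute[of l0] add.commute)
  ultimately have action: "entry \<gamma> h \<mu> (sites L) False False l0 (bethe_vector \<gamma> h L \<mu> ws)
    = (\<lambda>s. LamA \<gamma> h L \<mu> l0 * R.prodF1 ws l0 * bethe_vector \<gamma> h L \<mu> ws s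
      + (\<Sum>k<length ws. R.coefA l0 (ws ! k) (del_nth ws k)
          * entry \<gamma> h \<mu> (sites L) False True l0 (bethe_vector \<gamma> h L \<mu> (del_nth ws k)) s))"
    using R.bethe_action unfolding R.A_action_def bethe by blast
  have coefA: "R.coefA l0 (ws ! k) (del_nth ws k) = - Nlam \<gamma> h L \<mu> l0 ws k" if k: "k < length ws" for k
  proof -
    have "wa \<gamma> (2 * (ws ! k)) \<noteq> 0" "wb (ws ! k - l0) \<noteq> 0" "wa \<gamma> (ws ! k + l0) \<noteq> 0"
      using gen nth_mem[OF k] by auto
    then show ?thesis
      unfolding R.coefA_def R.prodF1_def R.prodF2_def vac_Dt_eigen_LamDt[OF \<open>wa \<gamma> (2 * (ws ! k)) \<noteq> 0\<close>]
      by (rule unwanted_coefficient_eq_Nlam[OF k])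
  qed
  have "bethe_vector \<gamma> h L \<mu> (delvec l0 ws k)
      = entry \<gamma> h \<mu> (sites L) False True l0 (bethe_vector \<gamma> h L \<mu> (del_nth ws k))" for k
    by (simp add: delvec_del_nth bethe_vector_def)
  then show ?thesis
    unfolding action by (simp add: coefA R.prodF1_def prod_list_map_nth)
qed

theorem theorem1:
  fixes \<gamma> h l0 :: complex and L n :: nat and \<mu> :: "nat \<Rightarrow> complex"
    and xs ys :: "complex list"
  assumes "L \<ge> 1" and "n \<ge> 1"
    and "length xs = n" and "length ys = n"
    and "\<forall>z \<in> set xs \<union> set ys. wb (z - l0) \<noteq> 0 \<and> wa \<gamma> (z + l0) \<noteq> 0 \<and> wa \<gamma> (2 * z) \<noteq> 0"
    and "\<forall>zs \<in> {xs, ys}. \<forall>j<n. \<forall>k<n. j \<noteq> k \<longrightarrow>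
           wb (zs ! j - zs ! k) \<noteq> 0 \<and> wa \<gamma> (zs ! j + zs ! k) \<noteq> 0 \<and> wb (zs ! j + zs ! k + \<gamma>) \<noteq> 0"
  shows "M0 \<gamma> h L \<mu> l0 xs ys * Sn \<gamma> h L \<mu> xs ys
         + (\<Sum>k<n. NC \<gamma> h L \<mu> l0 xs k * Sn \<gamma> h L \<mu> (delvec l0 xs k) ys)
         + (\<Sum>k<n. NB \<gamma> h L \<mu> l0 ys k * Sn \<gamma> h L \<mu> xs (delvec l0 ys k)) = 0"
proof -
  let ?B = "bethe_vector \<gamma> h L"
  have gen: "\<forall>z\<in>set ws. wb (z - l0) \<noteq> 0 \<and> wa \<gamma> (z + l0) \<noteq> 0 \<and> wa \<gamma> (2 * z) \<noteq> 0"
    and pairs: "\<forall>i<length ws. \<forall>j<length ws. i \<noteq> j \<longrightarrow> wb (ws ! i - ws ! j) \<noteq> 0 \<and> wa \<gamma> (ws ! i + ws ! j) \<noteq> 0"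
    if "ws = xs \<or> ws = ys" for ws
    using that assms(3-6) by auto
  define X0 where "X0 = pairing L (?B (\<lambda>k. - \<mu> k) xs) (entry \<gamma> h \<mu> (sites L) False False l0 (?B \<mu> ys))"
  have right: "X0 = LamA \<gamma> h L \<mu> l0 * (\<Prod>k<n. F1 \<gamma> (ys ! k) l0) * Sn \<gamma> h L \<mu> xs ys
      + (\<Sum>k<n. - Nlam \<gamma> h L \<mu> l0 ys k * Sn \<gamma> h L \<mu> xs (delvec l0 ys k))"
    unfolding X0_def entry_A_bethe_vector[OF gen[OF disjI2[OF refl]] pairs[OF disjI2[OF refl]]] pairing_comb_right Sn_eq_pairing assms(4) by simp
  have "X0 = pairing L (entry \<gamma> h (\<lambda>k. - \<mu> k) (sites L) False False l0 (?B (\<lambda>k. - \<mu> k) xs)) (?B \<mu> ys)"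
    unfolding X0_def entry_transpose[where \<mu> = "\<lambda>k. - \<mu> k", OF equalityD1[OF sites_props(3)]] by simp
  then have left: "X0 = LamA \<gamma> h L \<mu> l0 * (\<Prod>k<n. F1 \<gamma> (xs ! k) l0) * Sn \<gamma> h L \<mu> xs ys
      + (\<Sum>k<n. - Nlam \<gamma> h L \<mu> l0 xs k * Sn \<gamma> h L \<mu> (delvec l0 xs k) ys)"
    unfolding entry_A_bethe_vector[OF gen[OF disjI1[OF refl]] pairs[OF disjI1[OF refl]]] pairing_comb_left Sn_eq_pairing assms(3)
    by (simp add: LamA_uminus_inhom Nlam_uminus_inhom)
  show ?thesis
    using left right assms(3,4) by (simp add: M0_def NC_def NB_def sum_negf algebra_simps)
qed

end
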